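(* Let $k,d\geqslant 1$ be integers and let $L$ be a $\mathbb{Z}_p$-Lie lattice of dimension $d+1$ that admits a $d$-dimensional abelian ideal. Then $L$ is self-similar of index $p^{dk}$.
   Context: $p$ is any prime. A $\mathbb{Z}_p$-Lie lattice is a $\mathbb{Z}_p$-Lie algebra whose underlying module is finitely generated and free; dimension means rank. A virtual endomorphism of $L$ is a homomorphism of algebras $\varphi:M\to L$ with $M\subseteq L$ a finite-index subalgebra, of index $[L:M]$. An ideal $I$ of $L$ is $\varphi$-invariant if it is contained in the domain of every power of $\varphi$ and $\varphi(I)\subseteq I$; $\varphi$ is simple if no non-zero ideal of $L$ is $\varphi$-invariant. $L$ is self-similar of index $p^k$ if there is a simple virtual endomorphism of $L$ of index $p^k$. *)

theory Defs
  imports "HOL-Algebra.Module" "HOL-Algebra.AbelCoset" "HOL-Computational_Algebra.Primes"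
begin

text \<open>The p-adic integers Z_p, realised concretely as the inverse limit of the rings
  Z/p^n Z: an element is a compatible sequence of residues x n in [0, p^n).\<close>
definition Zp :: "nat \<Rightarrow> (nat \<Rightarrow> int) ring" where
  "Zp p = \<lparr>carrier = {x. \<forall>n. 0 \<le> x n \<and> x n < int p ^ n \<and> x (Suc n) mod (int p ^ n) = x n},
           monoid.mult = (\<lambda>x y n. (x n * y n) mod (int p ^ n)),
           one = (\<lambda>n. 1 mod (int p ^ n)),
           zero = (\<lambda>n. 0),
           add = (\<lambda>x y n. (x n + y n) mod (int p ^ n))\<rparr>"

definition lie_algebra ::
  "('r, 'm) ring_scheme \<Rightarrow> ('r, 'a) module \<Rightarrow> ('a \<Rightarrow> 'a \<Rightarrow> 'a) \<Rightarrow> bool" where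
  "lie_algebra R L br \<longleftrightarrow> module R L \<and>
     (\<forall>x\<in>carrier L. \<forall>y\<in>carrier L. br x y \<in> carrier L) \<and>
     (\<forall>x\<in>carrier L. \<forall>y\<in>carrier L. \<forall>z\<in>carrier L.
        br (x \<oplus>\<^bsub>L\<^esub> y) z = br x z \<oplus>\<^bsub>L\<^esub> br y z \<and>
        br x (y \<oplus>\<^bsub>L\<^esub> z) = br x y \<oplus>\<^bsub>L\<^esub> br x z) \<and>
     (\<forall>a\<in>carrier R. \<forall>x\<in>carrier L. \<forall>y\<in>carrier L.
        br (a \<odot>\<^bsub>L\<^esub> x) y = a \<odot>\<^bsub>L\<^esub> br x y \<and>
        br x (a \<odot>\<^bsub>L\<^esub> y) = a \<odot>\<^bsub>L\<^esub> br x y) \<and>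
     (\<forall>x\<in>carrier L. br x x = \<zero>\<^bsub>L\<^esub>) \<and>
     (\<forall>x\<in>carrier L. \<forall>y\<in>carrier L. \<forall>z\<in>carrier L.
        br x (br y z) \<oplus>\<^bsub>L\<^esub> br y (br z x) \<oplus>\<^bsub>L\<^esub> br z (br x y) = \<zero>\<^bsub>L\<^esub>)"

definition is_basis ::
  "('r, 'm) ring_scheme \<Rightarrow> ('r, 'a) module \<Rightarrow> 'a set \<Rightarrow> nat \<Rightarrow> (nat \<Rightarrow> 'a) \<Rightarrow> bool" where
  "is_basis R L S n b \<longleftrightarrow> (\<forall>i<n. b i \<in> S) \<and>
     (\<forall>x\<in>S. \<exists>!c. c \<in> {..<n} \<rightarrow>\<^sub>E carrier R \<and>
        x = finsum L (\<lambda>i. c i \<odot>\<^bsub>L\<^esub> b i) {..<n})"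

definition free_rank ::
  "('r, 'm) ring_scheme \<Rightarrow> ('r, 'a) module \<Rightarrow> 'a set \<Rightarrow> nat \<Rightarrow> bool" where
  "free_rank R L S n \<longleftrightarrow> submodule S R L \<and> (\<exists>b. is_basis R L S n b)"

definition lie_lattice :: "nat \<Rightarrow> (nat \<Rightarrow> int, 'a) module \<Rightarrow> ('a \<Rightarrow> 'a \<Rightarrow> 'a) \<Rightarrow> nat \<Rightarrow> bool" where
  "lie_lattice p L br n \<longleftrightarrow> prime p \<and> lie_algebra (Zp p) L br \<and> free_rank (Zp p) L (carrier L) n"

definition lie_subalgebra ::
  "('r, 'm) ring_scheme \<Rightarrow> ('r, 'a) module \<Rightarrow> ('a \<Rightarrow> 'a \<Rightarrow> 'a) \<Rightarrow> 'a set \<Rightarrow> bool" where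
  "lie_subalgebra R L br M \<longleftrightarrow> submodule M R L \<and> (\<forall>x\<in>M. \<forall>y\<in>M. br x y \<in> M)"

definition lie_ideal ::
  "('r, 'm) ring_scheme \<Rightarrow> ('r, 'a) module \<Rightarrow> ('a \<Rightarrow> 'a \<Rightarrow> 'a) \<Rightarrow> 'a set \<Rightarrow> bool" where
  "lie_ideal R L br I \<longleftrightarrow> submodule I R L \<and> (\<forall>x\<in>carrier L. \<forall>y\<in>I. br x y \<in> I)"

definition abelian_subset :: "('r, 'a) module \<Rightarrow> ('a \<Rightarrow> 'a \<Rightarrow> 'a) \<Rightarrow> 'a set \<Rightarrow> bool" where
  "abelian_subset L br A \<longleftrightarrow> (\<forall>x\<in>A. \<forall>y\<in>A. br x y = \<zero>\<^bsub>L\<^esub>)"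

definition lattice_index :: "('r, 'a) module \<Rightarrow> 'a set \<Rightarrow> nat" where
  "lattice_index L M = card (a_rcosets\<^bsub>L\<^esub> M)"

definition virtual_endo ::
  "('r, 'm) ring_scheme \<Rightarrow> ('r, 'a) module \<Rightarrow> ('a \<Rightarrow> 'a \<Rightarrow> 'a) \<Rightarrow> 'a set \<Rightarrow> ('a \<Rightarrow> 'a) \<Rightarrow> bool" where
  "virtual_endo R L br M \<phi> \<longleftrightarrow> lie_subalgebra R L br M \<and> finite (a_rcosets\<^bsub>L\<^esub> M) \<and>
     (\<forall>x\<in>M. \<phi> x \<in> carrier L) \<and>
     (\<forall>x\<in>M. \<forall>y\<in>M. \<phi> (x \<oplus>\<^bsub>L\<^esub> y) = \<phi> x \<oplus>\<^bsub>L\<^esub> \<phi> y) \<and>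
     (\<forall>a\<in>carrier R. \<forall>x\<in>M. \<phi> (a \<odot>\<^bsub>L\<^esub> x) = a \<odot>\<^bsub>L\<^esub> \<phi> x) \<and>
     (\<forall>x\<in>M. \<forall>y\<in>M. \<phi> (br x y) = br (\<phi> x) (\<phi> y))"

fun pow_dom :: "('r, 'a) module \<Rightarrow> 'a set \<Rightarrow> ('a \<Rightarrow> 'a) \<Rightarrow> nat \<Rightarrow> 'a set" where
  "pow_dom L M \<phi> 0 = carrier L"
| "pow_dom L M \<phi> (Suc n) = {x \<in> M. \<phi> x \<in> pow_dom L M \<phi> n}"

definition phi_invariant :: "('r, 'a) module \<Rightarrow> 'a set \<Rightarrow> ('a \<Rightarrow> 'a) \<Rightarrow> 'a set \<Rightarrow> bool" where
  "phi_invariant L M \<phi> I \<longleftrightarrow> (\<forall>n. I \<subseteq> pow_dom L M \<phi> n) \<and> \<phi> ` I \<subseteq> I"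

definition simple_virtual_endo ::
  "('r, 'm) ring_scheme \<Rightarrow> ('r, 'a) module \<Rightarrow> ('a \<Rightarrow> 'a \<Rightarrow> 'a) \<Rightarrow> 'a set \<Rightarrow> ('a \<Rightarrow> 'a) \<Rightarrow> bool" where
  "simple_virtual_endo R L br M \<phi> \<longleftrightarrow> virtual_endo R L br M \<phi> \<and>
     (\<forall>I. lie_ideal R L br I \<and> phi_invariant L M \<phi> I \<longrightarrow> I = {\<zero>\<^bsub>L\<^esub>})"

definition self_similar_of_index ::
  "nat \<Rightarrow> (nat \<Rightarrow> int, 'a) module \<Rightarrow> ('a \<Rightarrow> 'a \<Rightarrow> 'a) \<Rightarrow> nat \<Rightarrow> bool" where
  "self_similar_of_index p L br N \<longleftrightarrow>
     (\<exists>M \<phi>. simple_virtual_endo (Zp p) L br M \<phi> \<and> lattice_index L M = N)"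

end

theory Submission
  imports Defs
begin

text \<open>Fix a basis of L, so that L = Z_p^(d+1). If L is abelian, the cyclic shift
  (x_0, ..., x_d) \<mapsto> (x_d / p^(dk), x_0, ..., x_(d-1)) is a virtual endomorphism of index p^(dk)
  whose (d+1)-st power divides by p^(dk); the elements of an invariant ideal are therefore divisible
  by every power of p, hence zero. Otherwise a linear relation among the coordinates of a basis of
  the abelian ideal A gives a primitive functional F vanishing on A. Its kernel H contains a
  multiple of each of its elements in A, so it is again an abelian ideal, and L = Z_p t \<oplus> H with
  F(t) = 1. The map c t + p^k w \<mapsto> c t + w is a virtual endomorphism of index p^(dk); iterating it
  pushes an invariant ideal into the line Z_p t, and a non-zero ideal there would make H centralise
  t, forcing L to be abelian.\<close>

section \<open>The ring of p-adic integers\<close>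

lemma exists_inverse_mod:
  fixes a m :: int
  assumes "coprime a m"
  shows "\<exists>u. (a * u) mod m = 1 mod m"
proof -
  obtain u v where "u * a + v * m = gcd a m" using bezout_int by blast
  then have "a * u = 1 - v * m" using assms by (simp add: algebra_simps)
  then have "(a * u) mod m = 1 mod m" by (simp add: mod_diff_eq[symmetric])
  then show ?thesis by blast
qed

lemma inverse_mod_unique:
  fixes a b c q :: int
  assumes "(c * b) mod q = 1 mod q" and "(c * a) mod q = 1 mod q"
  shows "a mod q = b mod q"
proof -
  have "a mod q = (a * (c * b)) mod q" using assms(1) by (metis mod_mult_right_eq mult.right_neutral)
  also have "\<dots> = (b * (c * a)) mod q" by (simp add: ac_simps)
  also have "\<dots> = b mod q" using assms(2) by (metis mod_mult_right_eq mult.right_neutral)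
  finally show ?thesis .
qed

locale padic_integers = cring R for R (structure) +
  fixes p :: nat
  assumes R_eq: "R = Zp p" and prime_p: "prime p"
begin

lemma carrier_iff:
  "x \<in> carrier R \<longleftrightarrow> (\<forall>n. 0 \<le> x n \<and> x n < int p ^ n \<and> x (Suc n) mod int p ^ n = x n)"
  by (simp add: R_eq Zp_def)

lemma add_apply: "(x \<oplus> y) n = (x n + y n) mod int p ^ n"
  by (simp add: R_eq Zp_def)

lemma mult_apply: "(x \<otimes> y) n = (x n * y n) mod int p ^ n"
  by (simp add: R_eq Zp_def)

lemma zero_eq: "\<zero> = (\<lambda>n. 0)"
  by (simp add: R_eq Zp_def)

lemma one_eq: "\<one> = (\<lambda>n. 1 mod int p ^ n)"
  by (simp add: R_eq Zp_def)

lemma p_gt_1: "int p > 1"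
  using prime_p prime_gt_1_nat by auto

lemma residue_bounds: "x \<in> carrier R \<Longrightarrow> 0 \<le> x n \<and> x n < int p ^ n"
  unfolding carrier_iff by blast

lemma residue_mod_self: "x \<in> carrier R \<Longrightarrow> x n mod int p ^ n = x n"
  using residue_bounds by (simp add: mod_pos_pos_trivial)

lemma residue_0: "x \<in> carrier R \<Longrightarrow> x 0 = 0"
  using residue_bounds[of x 0] by simp

lemma residue_compat:
  assumes x: "x \<in> carrier R" and "n \<le> m"
  shows "x m mod int p ^ n = x n"
proof -
  have "x (n + j) mod int p ^ n = x n" for j
  proof (induction j)
    case 0
    then show ?case using residue_mod_self[OF x] by simp
  next
    case (Suc j)
    have "x (n + Suc j) mod int p ^ n = (x (Suc (n + j)) mod int p ^ (n + j)) mod int p ^ n"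
      by (simp add: mod_mod_cancel le_imp_power_dvd)
    also have "\<dots> = x (n + j) mod int p ^ n"
      using x by (simp add: carrier_iff)
    finally show ?case using Suc by simp
  qed
  then show ?thesis using \<open>n \<le> m\<close> by (metis le_add_diff_inverse)
qed

lemma residues_of_int_closed: "(\<lambda>n. r mod int p ^ n) \<in> carrier R"
  unfolding carrier_iff using p_gt_1 by (auto simp: mod_mod_cancel le_imp_power_dvd)

lemma minus_apply:
  assumes x: "x \<in> carrier R" and y: "y \<in> carrier R"
  shows "(x \<ominus> y) n = (x n - y n) mod int p ^ n"
proof -
  have "(y n + (\<ominus> y) n) mod int p ^ n = 0"
    using r_neg[OF y] by (metis add_apply zero_eq)
  then have "(x n - y n + (y n + (\<ominus> y) n)) mod int p ^ n = (x n - y n) mod int p ^ n"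
    by (metis add.right_neutral mod_add_right_eq)
  then show ?thesis by (simp add: a_minus_def add_apply)
qed

definition p_pow :: "nat \<Rightarrow> nat \<Rightarrow> int" where
  "p_pow m = (\<lambda>n. int p ^ m mod int p ^ n)"

lemma p_pow_closed [simp]: "p_pow m \<in> carrier R"
  unfolding carrier_iff p_pow_def using p_gt_1 by (auto simp: mod_mod_cancel le_imp_power_dvd)

lemma p_pow_0: "p_pow 0 = \<one>"
  by (simp add: p_pow_def one_eq)

lemma p_pow_add: "p_pow a \<otimes> p_pow b = p_pow (a + b)"
  by (auto simp: p_pow_def mult_apply power_add mod_mult_eq)

lemma p_pow_nonzero: "p_pow m \<noteq> \<zero>"
proof
  assume "p_pow m = \<zero>"
  then have "p_pow m (Suc m) = 0" by (simp add: zero_eq)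
  moreover have "p_pow m (Suc m) = int p ^ m"
    unfolding p_pow_def using p_gt_1 by (intro mod_pos_pos_trivial) auto
  ultimately show False using p_gt_1 by simp
qed

lemma minus_apply_eq_0_iff:
  assumes "x \<in> carrier R" "y \<in> carrier R"
  shows "(x \<ominus> y) n = 0 \<longleftrightarrow> x n = y n"
  using assms by (simp add: minus_apply mod_eq_0_iff_dvd mod_eq_dvd_iff[symmetric] residue_mod_self)

lemma p_pow_mult_apply: "(p_pow m \<otimes> y) n = (int p ^ m * y n) mod int p ^ n"
  by (simp add: mult_apply p_pow_def mod_mult_left_eq)

text \<open>The quotient of x by p^m is the shifted sequence n \<mapsto> x (n + m) div p^m.\<close>
lemma p_pow_dvd_iff:
  assumes x: "x \<in> carrier R"
  shows "(\<exists>y\<in>carrier R. x = p_pow m \<otimes> y) \<longleftrightarrow> x m = 0"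
proof
  assume "\<exists>y\<in>carrier R. x = p_pow m \<otimes> y"
  then show "x m = 0" by (auto simp: p_pow_mult_apply)
next
  assume x0: "x m = 0"
  have pm: "int p ^ m > 0" using p_gt_1 by simp
  have dvd: "int p ^ m dvd x (n + m)" for n
    using residue_compat[OF x, of m "n + m"] x0 by (simp add: mod_eq_0_iff_dvd)
  define y where "y = (\<lambda>n. x (n + m) div int p ^ m)"
  have x_eq: "x (n + m) = int p ^ m * y n" for n
    using dvd[of n] by (simp add: y_def)
  have "y \<in> carrier R"
    unfolding carrier_iff
  proof (intro allI conjI)
    fix n
    have "int p ^ m * y n < int p ^ m * int p ^ n"
      using residue_bounds[OF x, of "n + m"] x_eq[of n] by (simp add: power_add mult.commute)
    then show "y n < int p ^ n" using pm by simp
    show "0 \<le> y n" using residue_bounds[OF x, of "n + m"] pm by (simp add: y_def pos_imp_zdiv_nonneg_iff)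
    have "int p ^ m * (y (Suc n) mod int p ^ n) = (int p ^ m * y (Suc n)) mod (int p ^ m * int p ^ n)"
      by (rule mult_mod_right)
    also have "\<dots> = x (Suc n + m) mod int p ^ (n + m)"
      by (simp only: x_eq power_add mult.commute)
    also have "\<dots> = int p ^ m * y n"
      using residue_compat[OF x, of "n + m" "Suc n + m"] x_eq[of n] by simp
    finally show "y (Suc n) mod int p ^ n = y n" using p_gt_1 by simp
  qed
  moreover have "x = p_pow m \<otimes> y"
  proof
    fix n
    show "x n = (p_pow m \<otimes> y) n"
      using residue_compat[OF x, of n "n + m"] x_eq[of n] by (simp add: p_pow_mult_apply)
  qed
  ultimately show "\<exists>y\<in>carrier R. x = p_pow m \<otimes> y" by blast
qed

lemma residue_coprime:
  assumes x: "x \<in> carrier R" and x1: "x 1 \<noteq> 0"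
  shows "coprime (x n) (int p ^ n)"
proof (cases n)
  case (Suc n')
  have "x n mod int p = x 1" using residue_compat[OF x, of 1 n] Suc by simp
  then have "\<not> int p dvd x n" using x1 by (metis dvd_eq_mod_eq_0)
  then have "coprime (int p) (x n)" using prime_imp_coprime[of "int p"] prime_p by simp
  then show ?thesis by (simp add: coprime_commute)
qed simp

text \<open>The inverse is assembled from inverses modulo p^n; these are compatible because an
  inverse modulo p^n is unique.\<close>
lemma unit_if_residue_nonzero:
  assumes x: "x \<in> carrier R" and x1: "x 1 \<noteq> 0"
  shows "\<exists>y\<in>carrier R. x \<otimes> y = \<one>"
proof -
  obtain w0 where w0: "\<And>n. (x n * w0 n) mod int p ^ n = 1 mod int p ^ n"
    using exists_inverse_mod[OF residue_coprime[OF x x1]] by metis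
  define w where "w n = w0 n mod int p ^ n" for n
  have w: "(x n * w n) mod int p ^ n = 1 mod int p ^ n" for n
    using w0[of n] by (simp add: w_def mod_mult_right_eq)
  have w_Suc: "(x n * w (Suc n)) mod int p ^ n = 1 mod int p ^ n" for n
  proof -
    have "(x n * w (Suc n)) mod int p ^ n = (x (Suc n) * w (Suc n)) mod int p ^ n"
      using residue_compat[OF x, of n "Suc n"] by (simp add: mod_mult_left_eq[of "x (Suc n)", symmetric])
    also have "\<dots> = ((x (Suc n) * w (Suc n)) mod int p ^ Suc n) mod int p ^ n"
      by (simp add: mod_mod_cancel)
    also have "\<dots> = 1 mod int p ^ n" using w[of "Suc n"] by (simp add: mod_mod_cancel)
    finally show ?thesis .
  qed
  have "w \<in> carrier R" unfolding carrier_iff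
  proof (intro allI conjI)
    fix n
    show "0 \<le> w n" "w n < int p ^ n" unfolding w_def using p_gt_1 by simp_all
    have "w (Suc n) mod int p ^ n = w n mod int p ^ n"
      using w[of n] w_Suc[of n] by (rule inverse_mod_unique)
    then show "w (Suc n) mod int p ^ n = w n" by (simp add: w_def)
  qed
  moreover have "x \<otimes> w = \<one>"
    using w by (simp add: fun_eq_iff mult_apply one_eq)
  ultimately show ?thesis by blast
qed

lemma residue_of_unit_part:
  assumes g: "g \<in> carrier R" and nz: "(p_pow v \<otimes> g) (Suc v) \<noteq> 0"
  shows "g 1 \<noteq> 0"
proof
  assume "g 1 = 0"
  then have "int p dvd g (Suc v)"
    using residue_compat[OF g, of 1 "Suc v"] by (simp add: dvd_eq_mod_eq_0)
  then have "int p ^ Suc v dvd int p ^ v * g (Suc v)" by (simp add: mult.commute)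
  then show False using nz by (simp add: p_pow_mult_apply)
qed

text \<open>Here v is the largest level at which all residues of the family vanish.\<close>
lemma primitive_factorization:
  assumes f: "\<And>i. i \<in> I \<Longrightarrow> f i \<in> carrier R" and i1: "i1 \<in> I" "f i1 \<noteq> \<zero>"
  obtains v g i0 where "\<And>i. i \<in> I \<Longrightarrow> g i \<in> carrier R" "\<And>i. i \<in> I \<Longrightarrow> f i = p_pow v \<otimes> g i"
    and "i0 \<in> I" "g i0 1 \<noteq> 0"
proof -
  obtain N where N: "f i1 N \<noteq> 0" using i1 by (auto simp: zero_eq)
  define P where "P m \<longleftrightarrow> (\<forall>i\<in>I. f i m = 0)" for m
  have P0: "P 0" using f residue_0 by (simp add: P_def)
  have P_bound: "m \<le> N" if "P m" for m
  proof (rule ccontr)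
    assume "\<not> m \<le> N"
    then have "f i1 m mod int p ^ N = f i1 N" using residue_compat[OF f[OF i1(1)]] by simp
    then show False using that N i1(1) by (simp add: P_def)
  qed
  define v where "v = Greatest P"
  have "P v" unfolding v_def using P0 P_bound by (rule GreatestI_nat)
  have "\<not> P (Suc v)" using Greatest_le_nat[of P "Suc v" N] P_bound unfolding v_def by auto
  then obtain i0 where i0: "i0 \<in> I" "f i0 (Suc v) \<noteq> 0" by (auto simp: P_def)
  have "\<forall>i\<in>I. \<exists>g. g \<in> carrier R \<and> f i = p_pow v \<otimes> g"
    using \<open>P v\<close> f p_pow_dvd_iff unfolding P_def by blast
  then obtain g where g: "\<And>i. i \<in> I \<Longrightarrow> g i \<in> carrier R \<and> f i = p_pow v \<otimes> g i" by metis
  have "g i0 1 \<noteq> 0" using residue_of_unit_part g i0 by metis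
  then show thesis using that g i0 by blast
qed

lemma unit_factorization:
  assumes "x \<in> carrier R" "x \<noteq> \<zero>"
  obtains v u y where "u \<in> carrier R" "y \<in> carrier R" "u \<otimes> y = \<one>" "x = p_pow v \<otimes> u"
proof -
  obtain v g i0 where g: "\<And>i. i \<in> {0::nat} \<Longrightarrow> g i \<in> carrier R"
    "\<And>i. i \<in> {0::nat} \<Longrightarrow> x = p_pow v \<otimes> g i" and i0: "i0 \<in> {0}" "g i0 1 \<noteq> 0"
    by (rule primitive_factorization[of "{0::nat}" "\<lambda>_. x" 0]) (use assms in auto)
  have "g i0 \<in> carrier R" "x = p_pow v \<otimes> g i0" using g i0 by auto
  moreover obtain y where "y \<in> carrier R" "g i0 \<otimes> y = \<one>"
    using unit_if_residue_nonzero[of "g i0"] i0 calculation by blast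
  ultimately show thesis using that by blast
qed

lemma integral_Zp:
  assumes x: "x \<in> carrier R" and y: "y \<in> carrier R" and xy: "x \<otimes> y = \<zero>"
  shows "x = \<zero> \<or> y = \<zero>"
proof (rule ccontr)
  assume "\<not> ?thesis"
  then have "x \<noteq> \<zero>" "y \<noteq> \<zero>" by auto
  obtain a u u' where u: "u \<in> carrier R" "u' \<in> carrier R" "u \<otimes> u' = \<one>" "x = p_pow a \<otimes> u"
    by (rule unit_factorization[OF x \<open>x \<noteq> \<zero>\<close>])
  obtain b w w' where w: "w \<in> carrier R" "w' \<in> carrier R" "w \<otimes> w' = \<one>" "y = p_pow b \<otimes> w"
    by (rule unit_factorization[OF y \<open>y \<noteq> \<zero>\<close>])
  have "(x \<otimes> y) \<otimes> (u' \<otimes> w') = (p_pow a \<otimes> p_pow b) \<otimes> ((u \<otimes> u') \<otimes> (w \<otimes> w'))"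
    unfolding u(4) w(4) using u(1,2) w(1,2) p_pow_closed[of a] p_pow_closed[of b] by algebra
  then have "p_pow (a + b) = \<zero>" using xy u(1-3) w(1-3) by (simp add: p_pow_add)
  then show False using p_pow_nonzero by simp
qed

lemma is_domain: "domain R"
  using integral_Zp p_pow_nonzero[of 0] by unfold_locales (auto simp: p_pow_0)

sublocale domain R
  by (rule is_domain)

definition p_quotient :: "nat \<Rightarrow> (nat \<Rightarrow> int) \<Rightarrow> nat \<Rightarrow> int" where
  "p_quotient m x = (SOME y. y \<in> carrier R \<and> x = p_pow m \<otimes> y)"

lemma p_quotient:
  assumes "x \<in> carrier R" "x m = 0"
  shows "p_quotient m x \<in> carrier R" "x = p_pow m \<otimes> p_quotient m x"
proof -
  have "\<exists>y. y \<in> carrier R \<and> x = p_pow m \<otimes> y" using p_pow_dvd_iff assms by blast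
  then show "p_quotient m x \<in> carrier R" "x = p_pow m \<otimes> p_quotient m x"
    unfolding p_quotient_def by (metis (mono_tags, lifting) someI_ex)+
qed

lemma p_quotient_p_pow_mult [simp]:
  assumes y: "y \<in> carrier R"
  shows "p_quotient m (p_pow m \<otimes> y) = y"
proof -
  have "(p_pow m \<otimes> y) m = 0" by (simp add: p_pow_mult_apply)
  then show ?thesis
    using p_quotient[of "p_pow m \<otimes> y" m] m_lcancel[of "p_pow m"] p_pow_nonzero y by simp
qed

lemma p_quotient_add:
  assumes x: "x \<in> carrier R" "x m = 0" and y: "y \<in> carrier R" "y m = 0"
  shows "p_quotient m (x \<oplus> y) = p_quotient m x \<oplus> p_quotient m y"
proof -
  obtain u v where "u \<in> carrier R" "v \<in> carrier R" "x = p_pow m \<otimes> u" "y = p_pow m \<otimes> v"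
    using p_quotient[OF x] p_quotient[OF y] by blast
  then show ?thesis by (simp add: r_distr[symmetric])
qed

lemma p_quotient_mult:
  assumes a: "a \<in> carrier R" and x: "x \<in> carrier R" "x m = 0"
  shows "p_quotient m (a \<otimes> x) = a \<otimes> p_quotient m x"
proof -
  obtain u where "u \<in> carrier R" "x = p_pow m \<otimes> u" using p_quotient[OF x] by blast
  then show ?thesis using a by (simp add: m_lcomm[of a])
qed

lemma finsum_apply:
  assumes "finite J" "f \<in> J \<rightarrow> carrier R"
  shows "(\<Oplus>j\<in>J. f j) m = (\<Sum>j\<in>J. f j m) mod int p ^ m"
  using assms
proof (induction J rule: finite_induct)
  case (insert j J)
  then have "(\<Oplus>j\<in>insert j J. f j) m = (f j m + (\<Oplus>j\<in>J. f j) m) mod int p ^ m"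
    by (simp add: add_apply)
  then show ?case using insert by (simp add: mod_add_right_eq)
qed (simp add: zero_eq)

end

section \<open>Free modules with a finite basis\<close>

lemma (in module) submodule_zero_closed:
  assumes "submodule H R M"
  shows "\<zero>\<^bsub>M\<^esub> \<in> H"
proof -
  obtain x where x: "x \<in> H" using submoduleE(2)[OF assms] by blast
  then have "\<zero> \<odot>\<^bsub>M\<^esub> x \<in> H" using submoduleE(4)[OF assms] by blast
  moreover have "x \<in> carrier M" using x submoduleE(1)[OF assms] by blast
  ultimately show ?thesis by simp
qed

lemma (in module) submodule_finsum_closed:
  assumes H: "submodule H R M" and "finite J" "lam \<in> J \<rightarrow> carrier R" "X \<in> J \<rightarrow> H"
  shows "(\<Oplus>\<^bsub>M\<^esub>j\<in>J. lam j \<odot>\<^bsub>M\<^esub> X j) \<in> H"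
  using assms(2-4)
proof (induction J rule: finite_induct)
  case empty
  then show ?case using submodule_zero_closed[OF H] by simp
next
  case (insert j J)
  have HM: "H \<subseteq> carrier M" using submoduleE(1)[OF H] .
  then have "(\<Oplus>\<^bsub>M\<^esub>j\<in>insert j J. lam j \<odot>\<^bsub>M\<^esub> X j) = lam j \<odot>\<^bsub>M\<^esub> X j \<oplus>\<^bsub>M\<^esub> (\<Oplus>\<^bsub>M\<^esub>j\<in>J. lam j \<odot>\<^bsub>M\<^esub> X j)"
    using insert by (intro M.finsum_insert) auto
  moreover have "lam j \<odot>\<^bsub>M\<^esub> X j \<in> H" using insert.prems submoduleE(4)[OF H] by blast
  ultimately show ?case using insert submoduleE(5)[OF H] by auto
qed

lemma (in module) linear_map_finsum:
  assumes h_closed: "\<And>x. x \<in> carrier M \<Longrightarrow> h x \<in> carrier R"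
    and h_add: "\<And>x y. x \<in> carrier M \<Longrightarrow> y \<in> carrier M \<Longrightarrow> h (x \<oplus>\<^bsub>M\<^esub> y) = h x \<oplus> h y"
    and h_smult: "\<And>c x. c \<in> carrier R \<Longrightarrow> x \<in> carrier M \<Longrightarrow> h (c \<odot>\<^bsub>M\<^esub> x) = c \<otimes> h x"
    and "finite J" "lam \<in> J \<rightarrow> carrier R" "X \<in> J \<rightarrow> carrier M"
  shows "h (\<Oplus>\<^bsub>M\<^esub>j\<in>J. lam j \<odot>\<^bsub>M\<^esub> X j) = (\<Oplus>j\<in>J. lam j \<otimes> h (X j))"
  using assms(4-6)
proof (induction J rule: finite_induct)
  case empty
  show ?case using h_smult[of \<zero> "\<zero>\<^bsub>M\<^esub>"] h_closed[of "\<zero>\<^bsub>M\<^esub>"] by simp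
next
  case (insert j J)
  have "h (\<Oplus>\<^bsub>M\<^esub>j\<in>insert j J. lam j \<odot>\<^bsub>M\<^esub> X j) = h (lam j \<odot>\<^bsub>M\<^esub> X j \<oplus>\<^bsub>M\<^esub> (\<Oplus>\<^bsub>M\<^esub>j\<in>J. lam j \<odot>\<^bsub>M\<^esub> X j))"
    using insert by (subst M.finsum_insert) auto
  also have "\<dots> = lam j \<otimes> h (X j) \<oplus> (\<Oplus>j\<in>J. lam j \<otimes> h (X j))"
    using insert h_add[of "lam j \<odot>\<^bsub>M\<^esub> X j"] h_smult by (simp add: M.finsum_closed Pi_iff)
  also have "\<dots> = (\<Oplus>j\<in>insert j J. lam j \<otimes> h (X j))"
    using insert h_closed by (subst R.finsum_insert) auto
  finally show ?case .
qed

lemma basis_lincomb_eq_zero: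
  fixes R (structure) and M :: "('r, 'a) module" (structure)
  assumes "module R M" and basis: "is_basis R M S d b" and zero: "\<zero>\<^bsub>M\<^esub> \<in> S"
    and b: "\<And>j. j < d \<Longrightarrow> b j \<in> carrier M" and c: "\<And>j. j < d \<Longrightarrow> c j \<in> carrier R" and sum: "(\<Oplus>\<^bsub>M\<^esub>j\<in>{..<d}. c j \<odot>\<^bsub>M\<^esub> b j) = \<zero>\<^bsub>M\<^esub>"
    and j: "j < d"
  shows "c j = \<zero>"
proof -
  interpret module R M by fact
  have "\<exists>!c. c \<in> {..<d} \<rightarrow>\<^sub>E carrier R \<and> \<zero>\<^bsub>M\<^esub> = (\<Oplus>\<^bsub>M\<^esub>j\<in>{..<d}. c j \<odot>\<^bsub>M\<^esub> b j)"
    using basis zero unfolding is_basis_def by blast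
  moreover have "restrict c {..<d} \<in> {..<d} \<rightarrow>\<^sub>E carrier R"
    and "\<zero>\<^bsub>M\<^esub> = (\<Oplus>\<^bsub>M\<^esub>j\<in>{..<d}. restrict c {..<d} j \<odot>\<^bsub>M\<^esub> b j)"
    using c b sum[symmetric] by (auto intro!: M.finsum_cong')
  moreover have "(\<lambda>j\<in>{..<d}. \<zero>) \<in> {..<d} \<rightarrow>\<^sub>E carrier R"
    and "\<zero>\<^bsub>M\<^esub> = (\<Oplus>\<^bsub>M\<^esub>j\<in>{..<d}. (\<lambda>j\<in>{..<d}. \<zero>) j \<odot>\<^bsub>M\<^esub> b j)"
  proof -
    have "(\<Oplus>\<^bsub>M\<^esub>j\<in>{..<d}. (\<lambda>j\<in>{..<d}. \<zero>) j \<odot>\<^bsub>M\<^esub> b j) = (\<Oplus>\<^bsub>M\<^esub>j\<in>{..<d}. \<zero>\<^bsub>M\<^esub>)"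
      using b by (intro M.finsum_cong') auto
    then show "\<zero>\<^bsub>M\<^esub> = (\<Oplus>\<^bsub>M\<^esub>j\<in>{..<d}. (\<lambda>j\<in>{..<d}. \<zero>) j \<odot>\<^bsub>M\<^esub> b j)" by simp
  qed auto
  ultimately have "restrict c {..<d} = (\<lambda>j\<in>{..<d}. \<zero>)" by blast
  then show ?thesis using j by (metis lessThan_iff restrict_apply')
qed

locale module_with_basis = module R L for R (structure) and L (structure) +
  fixes n :: nat and e :: "nat \<Rightarrow> 'a"
  assumes basis: "is_basis R L (carrier L) n e"
begin

lemma basis_closed [simp]: "i < n \<Longrightarrow> e i \<in> carrier L"
  using basis unfolding is_basis_def by blast

definition lincomb :: "(nat \<Rightarrow> 'b) \<Rightarrow> 'a" where
  "lincomb c = (\<Oplus>\<^bsub>L\<^esub>i\<in>{..<n}. c i \<odot>\<^bsub>L\<^esub> e i)"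

definition coords :: "'a \<Rightarrow> nat \<Rightarrow> 'b" where
  "coords x = (THE c. c \<in> {..<n} \<rightarrow>\<^sub>E carrier R \<and> x = lincomb c)"

lemma lincomb_closed [simp]: "(\<And>i. i < n \<Longrightarrow> c i \<in> carrier R) \<Longrightarrow> lincomb c \<in> carrier L"
  unfolding lincomb_def by (intro M.finsum_closed) auto

lemma lincomb_cong:
  "(\<And>i. i < n \<Longrightarrow> c i = c' i) \<Longrightarrow> (\<And>i. i < n \<Longrightarrow> c' i \<in> carrier R) \<Longrightarrow> lincomb c = lincomb c'"
  unfolding lincomb_def by (intro M.finsum_cong') auto

lemma unique_lincomb: "x \<in> carrier L \<Longrightarrow> \<exists>!c. c \<in> {..<n} \<rightarrow>\<^sub>E carrier R \<and> x = lincomb c"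
  using basis unfolding is_basis_def lincomb_def by blast

lemma
  assumes "x \<in> carrier L"
  shows coords_PiE: "coords x \<in> {..<n} \<rightarrow>\<^sub>E carrier R" and lincomb_coords: "lincomb (coords x) = x"
proof -
  from unique_lincomb[OF assms] have "coords x \<in> {..<n} \<rightarrow>\<^sub>E carrier R \<and> x = lincomb (coords x)"
    unfolding coords_def by (rule theI')
  then show "coords x \<in> {..<n} \<rightarrow>\<^sub>E carrier R" "lincomb (coords x) = x" by auto
qed

lemma coords_closed [simp]: "x \<in> carrier L \<Longrightarrow> i < n \<Longrightarrow> coords x i \<in> carrier R"
  using coords_PiE[of x] by auto

lemma lincomb_inj:
  assumes c: "c \<in> {..<n} \<rightarrow>\<^sub>E carrier R" and c': "c' \<in> {..<n} \<rightarrow>\<^sub>E carrier R"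
    and eq: "lincomb c = lincomb c'"
  shows "c = c'"
proof -
  have "lincomb c \<in> carrier L" using c by (intro lincomb_closed) auto
  then have "\<exists>!d. d \<in> {..<n} \<rightarrow>\<^sub>E carrier R \<and> lincomb c = lincomb d" by (rule unique_lincomb)
  then show ?thesis using c c' eq by blast
qed

lemma coords_lincomb:
  assumes c: "\<And>i. i < n \<Longrightarrow> c i \<in> carrier R" and i: "i < n"
  shows "coords (lincomb c) i = c i"
proof -
  let ?c = "restrict c {..<n}"
  have "coords (lincomb c) = ?c"
  proof (rule lincomb_inj)
    show "coords (lincomb c) \<in> {..<n} \<rightarrow>\<^sub>E carrier R" using c by (intro coords_PiE) simp
    show "?c \<in> {..<n} \<rightarrow>\<^sub>E carrier R" using c by simp
    have "lincomb (coords (lincomb c)) = lincomb c" using c by (intro lincomb_coords) simp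
    also have "\<dots> = lincomb ?c" using c by (intro lincomb_cong) auto
    finally show "lincomb (coords (lincomb c)) = lincomb ?c" .
  qed
  then show ?thesis using i by simp
qed

lemma coords_eqI:
  assumes "x \<in> carrier L" "y \<in> carrier L" "\<And>i. i < n \<Longrightarrow> coords x i = coords y i"
  shows "x = y"
proof -
  have "x = lincomb (coords x)" using assms by (simp add: lincomb_coords)
  also have "\<dots> = lincomb (coords y)" using assms by (intro lincomb_cong) auto
  also have "\<dots> = y" using assms by (simp add: lincomb_coords)
  finally show ?thesis .
qed

lemma lincomb_add:
  assumes "\<And>i. i < n \<Longrightarrow> c i \<in> carrier R" "\<And>i. i < n \<Longrightarrow> c' i \<in> carrier R"
  shows "lincomb (\<lambda>i. c i \<oplus> c' i) = lincomb c \<oplus>\<^bsub>L\<^esub> lincomb c'"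
proof -
  have "lincomb (\<lambda>i. c i \<oplus> c' i) = (\<Oplus>\<^bsub>L\<^esub>i\<in>{..<n}. c i \<odot>\<^bsub>L\<^esub> e i \<oplus>\<^bsub>L\<^esub> c' i \<odot>\<^bsub>L\<^esub> e i)"
    unfolding lincomb_def using assms by (intro M.finsum_cong') (auto simp: smult_l_distr)
  also have "\<dots> = lincomb c \<oplus>\<^bsub>L\<^esub> lincomb c'"
    unfolding lincomb_def using assms by (intro M.finsum_addf) auto
  finally show ?thesis .
qed

lemma lincomb_smult:
  assumes "a \<in> carrier R" "\<And>i. i < n \<Longrightarrow> c i \<in> carrier R"
  shows "lincomb (\<lambda>i. a \<otimes> c i) = a \<odot>\<^bsub>L\<^esub> lincomb c"
proof -
  have "lincomb (\<lambda>i. a \<otimes> c i) = (\<Oplus>\<^bsub>L\<^esub>i\<in>{..<n}. a \<odot>\<^bsub>L\<^esub> (c i \<odot>\<^bsub>L\<^esub> e i))"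
    unfolding lincomb_def using assms by (intro M.finsum_cong') (auto simp: smult_assoc1)
  also have "\<dots> = a \<odot>\<^bsub>L\<^esub> lincomb c"
    unfolding lincomb_def using assms by (intro finsum_smult_ldistr[symmetric]) auto
  finally show ?thesis .
qed

lemma coords_add:
  assumes x: "x \<in> carrier L" and y: "y \<in> carrier L" and i: "i < n"
  shows "coords (x \<oplus>\<^bsub>L\<^esub> y) i = coords x i \<oplus> coords y i"
  using lincomb_add[of "coords x" "coords y"] coords_lincomb[of "\<lambda>i. coords x i \<oplus> coords y i"]
    x y i by (simp add: lincomb_coords)

lemma coords_smult:
  assumes a: "a \<in> carrier R" and x: "x \<in> carrier L" and i: "i < n"
  shows "coords (a \<odot>\<^bsub>L\<^esub> x) i = a \<otimes> coords x i"
  using lincomb_smult[of a "coords x"] coords_lincomb[of "\<lambda>i. a \<otimes> coords x i"]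
    a x i by (simp add: lincomb_coords)

lemma coords_zero: "i < n \<Longrightarrow> coords \<zero>\<^bsub>L\<^esub> i = \<zero>"
  using coords_smult[of \<zero> "\<zero>\<^bsub>L\<^esub>" i] by simp

lemma coords_minus:
  assumes x: "x \<in> carrier L" and y: "y \<in> carrier L" and i: "i < n"
  shows "coords (x \<ominus>\<^bsub>L\<^esub> y) i = coords x i \<ominus> coords y i"
proof -
  have m1: "\<ominus> \<one> \<in> carrier R" by simp
  have "x \<ominus>\<^bsub>L\<^esub> y = x \<oplus>\<^bsub>L\<^esub> (\<ominus> \<one>) \<odot>\<^bsub>L\<^esub> y"
    using y by (simp add: M.minus_eq smult_l_minus)
  then have "coords (x \<ominus>\<^bsub>L\<^esub> y) i = coords x i \<oplus> (\<ominus> \<one>) \<otimes> coords y i"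
    using coords_add[OF x smult_closed[OF m1 y] i] coords_smult[OF m1 y i] by simp
  then show ?thesis using x y i by (simp add: R.l_minus R.minus_eq)
qed

lemma coords_eq_zeroI: "x \<in> carrier L \<Longrightarrow> (\<And>i. i < n \<Longrightarrow> coords x i = \<zero>) \<Longrightarrow> x = \<zero>\<^bsub>L\<^esub>"
  using coords_eqI[of x "\<zero>\<^bsub>L\<^esub>"] coords_zero by simp

lemma coords_basis:
  assumes "j < n" "i < n"
  shows "coords (e j) i = (if i = j then \<one> else \<zero>)"
proof -
  have "lincomb (\<lambda>i. if i = j then \<one> else \<zero>) = (\<Oplus>\<^bsub>L\<^esub>i\<in>{..<n}. if j = i then e i else \<zero>\<^bsub>L\<^esub>)"
    unfolding lincomb_def by (intro M.finsum_cong') auto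
  also have "\<dots> = e j" using assms by (intro M.finsum_singleton) auto
  finally show ?thesis using coords_lincomb[of "\<lambda>i. if i = j then \<one> else \<zero>" i] assms by simp
qed

lemma coords_finsum:
  assumes "i < n" "finite J" "lam \<in> J \<rightarrow> carrier R" "X \<in> J \<rightarrow> carrier L"
  shows "coords (\<Oplus>\<^bsub>L\<^esub>j\<in>J. lam j \<odot>\<^bsub>L\<^esub> X j) i = (\<Oplus>j\<in>J. lam j \<otimes> coords (X j) i)"
  using assms by (intro linear_map_finsum[where h = "\<lambda>x. coords x i"]) (auto simp: coords_add coords_smult)

definition functional :: "(nat \<Rightarrow> 'b) \<Rightarrow> 'a \<Rightarrow> 'b" where
  "functional g x = (\<Oplus>i\<in>{..<n}. g i \<otimes> coords x i)"

context
  fixes g assumes g: "\<And>i. i < n \<Longrightarrow> g i \<in> carrier R"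
begin

lemma functional_closed [simp]: "x \<in> carrier L \<Longrightarrow> functional g x \<in> carrier R"
  unfolding functional_def using g by (intro R.finsum_closed) auto

lemma functional_add:
  assumes "x \<in> carrier L" "y \<in> carrier L"
  shows "functional g (x \<oplus>\<^bsub>L\<^esub> y) = functional g x \<oplus> functional g y"
proof -
  have "functional g (x \<oplus>\<^bsub>L\<^esub> y) = (\<Oplus>i\<in>{..<n}. g i \<otimes> coords x i \<oplus> g i \<otimes> coords y i)"
    unfolding functional_def using g assms by (intro R.finsum_cong') (auto simp: coords_add R.r_distr)
  also have "\<dots> = functional g x \<oplus> functional g y"
    unfolding functional_def using g assms by (intro R.finsum_addf) auto
  finally show ?thesis .
qed

lemma functional_smult:
  assumes "c \<in> carrier R" "x \<in> carrier L"
  shows "functional g (c \<odot>\<^bsub>L\<^esub> x) = c \<otimes> functional g x"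
proof -
  have "functional g (c \<odot>\<^bsub>L\<^esub> x) = (\<Oplus>i\<in>{..<n}. c \<otimes> (g i \<otimes> coords x i))"
    unfolding functional_def using g assms by (intro R.finsum_cong') (auto simp: coords_smult R.m_lcomm)
  also have "\<dots> = c \<otimes> functional g x"
    unfolding functional_def using g assms by (intro R.finsum_rdistr[symmetric]) auto
  finally show ?thesis .
qed

lemma functional_single_coord:
  assumes x: "x \<in> carrier L" and i0: "i0 < n" and other: "\<And>i. i < n \<Longrightarrow> i \<noteq> i0 \<Longrightarrow> coords x i = \<zero>"
  shows "functional g x = g i0 \<otimes> coords x i0"
proof -
  have "functional g x = (\<Oplus>i\<in>{..<n}. if i0 = i then g i \<otimes> coords x i else \<zero>)"
    unfolding functional_def using other x g by (intro R.finsum_cong') auto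
  also have "\<dots> = g i0 \<otimes> coords x i0"
    using i0 x g by (intro R.finsum_singleton) auto
  finally show ?thesis .
qed

end

context
  assumes domain: "domain R"
begin

lemma smult_eq_zero_imp:
  assumes a: "a \<in> carrier R" "a \<noteq> \<zero>" and x: "x \<in> carrier L" and ax: "a \<odot>\<^bsub>L\<^esub> x = \<zero>\<^bsub>L\<^esub>"
  shows "x = \<zero>\<^bsub>L\<^esub>"
proof (rule coords_eq_zeroI[OF x])
  fix i assume i: "i < n"
  have "a \<otimes> coords x i = \<zero>" using coords_smult[OF a(1) x i] ax coords_zero[OF i] by simp
  moreover have "coords x i \<in> carrier R" using x i by simp
  ultimately show "coords x i = \<zero>" using domain.integral[OF domain] a by blast
qed

lemma smult_left_cancel:
  assumes a: "a \<in> carrier R" "a \<noteq> \<zero>" and x: "x \<in> carrier L" and y: "y \<in> carrier L"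
    and eq: "a \<odot>\<^bsub>L\<^esub> x = a \<odot>\<^bsub>L\<^esub> y"
  shows "x = y"
proof -
  have "a \<odot>\<^bsub>L\<^esub> (x \<ominus>\<^bsub>L\<^esub> y) = \<zero>\<^bsub>L\<^esub>"
    using eq a x y by (simp add: M.minus_eq smult_r_distr smult_r_minus M.r_neg)
  then have "x \<ominus>\<^bsub>L\<^esub> y = \<zero>\<^bsub>L\<^esub>" using smult_eq_zero_imp[OF a] x y by simp
  moreover have "x = (x \<ominus>\<^bsub>L\<^esub> y) \<oplus>\<^bsub>L\<^esub> y"
    using x y by (simp add: M.minus_eq M.add.m_assoc M.l_neg)
  ultimately show ?thesis using y by simp
qed

end

end

section \<open>Homogeneous linear systems over a domain\<close>

lemma (in cring) finsum_elimination:
  assumes "finite J" "lam \<in> J \<rightarrow> carrier R" "\<alpha> \<in> J \<rightarrow> carrier R" "\<beta> \<in> J \<rightarrow> carrier R"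
    and c: "c \<in> carrier R" and d: "d \<in> carrier R"
  shows "(\<Oplus>j\<in>J. lam j \<otimes> (c \<otimes> \<beta> j \<ominus> \<alpha> j \<otimes> d))
    = c \<otimes> (\<Oplus>j\<in>J. lam j \<otimes> \<beta> j) \<ominus> (\<Oplus>j\<in>J. lam j \<otimes> \<alpha> j) \<otimes> d"
  using assms(1-4)
proof (induction J rule: finite_induct)
  case empty
  show ?case using c d by (simp add: minus_eq)
next
  case (insert j J)
  have j: "lam j \<in> carrier R" "\<alpha> j \<in> carrier R" "\<beta> j \<in> carrier R" using insert.prems by auto
  have S: "(\<Oplus>j\<in>J. lam j \<otimes> \<beta> j) \<in> carrier R" "(\<Oplus>j\<in>J. lam j \<otimes> \<alpha> j) \<in> carrier R"
    using insert.prems by (auto intro!: finsum_closed)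
  have ring_identity: "\<And>Sa Sb. Sa \<in> carrier R \<Longrightarrow> Sb \<in> carrier R \<Longrightarrow>
      lam j \<otimes> (c \<otimes> \<beta> j \<ominus> \<alpha> j \<otimes> d) \<oplus> (c \<otimes> Sb \<ominus> Sa \<otimes> d)
      = c \<otimes> (lam j \<otimes> \<beta> j \<oplus> Sb) \<ominus> (lam j \<otimes> \<alpha> j \<oplus> Sa) \<otimes> d"
    using j c d by algebra
  have "(\<Oplus>j\<in>insert j J. lam j \<otimes> (c \<otimes> \<beta> j \<ominus> \<alpha> j \<otimes> d))
      = lam j \<otimes> (c \<otimes> \<beta> j \<ominus> \<alpha> j \<otimes> d) \<oplus>
        (c \<otimes> (\<Oplus>j\<in>J. lam j \<otimes> \<beta> j) \<ominus> (\<Oplus>j\<in>J. lam j \<otimes> \<alpha> j) \<otimes> d)"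
    using insert c d by (simp add: Pi_iff)
  also have "\<dots> = c \<otimes> (lam j \<otimes> \<beta> j \<oplus> (\<Oplus>j\<in>J. lam j \<otimes> \<beta> j))
      \<ominus> (lam j \<otimes> \<alpha> j \<oplus> (\<Oplus>j\<in>J. lam j \<otimes> \<alpha> j)) \<otimes> d"
    using ring_identity S by blast
  finally show ?case using insert by (simp add: Pi_iff)
qed

text \<open>Gaussian elimination of the pivot entry \<alpha> j0: a relation among the rows
  \<alpha> j0 \<beta> j - \<alpha> j \<beta> j0 (j \<in> J) lifts to a relation among the original rows indexed by insert j0 J.\<close>
lemma (in cring) pivot_identity:
  assumes J: "finite J" "j0 \<notin> J" and lam: "lam \<in> J \<rightarrow> carrier R"
    and \<alpha>: "\<alpha> \<in> insert j0 J \<rightarrow> carrier R" and \<beta>: "\<beta> \<in> insert j0 J \<rightarrow> carrier R"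
  shows "(\<Oplus>j\<in>insert j0 J. (if j = j0 then \<ominus> (\<Oplus>j\<in>J. lam j \<otimes> \<alpha> j) else \<alpha> j0 \<otimes> lam j) \<otimes> \<beta> j)
    = (\<Oplus>j\<in>J. lam j \<otimes> (\<alpha> j0 \<otimes> \<beta> j \<ominus> \<alpha> j \<otimes> \<beta> j0))"
proof -
  let ?s = "\<Oplus>j\<in>J. lam j \<otimes> \<alpha> j" and ?T = "\<Oplus>j\<in>J. lam j \<otimes> \<beta> j"
  have closed: "?s \<in> carrier R" "?T \<in> carrier R" "\<alpha> j0 \<in> carrier R" "\<beta> j0 \<in> carrier R"
    using lam \<alpha> \<beta> by (auto intro!: finsum_closed)
  have "(\<Oplus>j\<in>J. (if j = j0 then \<ominus> ?s else \<alpha> j0 \<otimes> lam j) \<otimes> \<beta> j) = (\<Oplus>j\<in>J. \<alpha> j0 \<otimes> (lam j \<otimes> \<beta> j))"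
    using J lam \<alpha> \<beta> by (intro finsum_cong') (auto simp: m_assoc Pi_iff)
  also have "\<dots> = \<alpha> j0 \<otimes> ?T"
    using J lam \<alpha> \<beta> by (intro finsum_rdistr[symmetric]) (auto simp: Pi_iff)
  finally have "(\<Oplus>j\<in>insert j0 J. (if j = j0 then \<ominus> ?s else \<alpha> j0 \<otimes> lam j) \<otimes> \<beta> j)
      = \<ominus> ?s \<otimes> \<beta> j0 \<oplus> \<alpha> j0 \<otimes> ?T"
    using J lam \<alpha> \<beta> closed by (simp add: Pi_iff)
  also have "\<dots> = \<alpha> j0 \<otimes> ?T \<ominus> ?s \<otimes> \<beta> j0"
  proof -
    have "\<And>S T. S \<in> carrier R \<Longrightarrow> T \<in> carrier R \<Longrightarrow> \<ominus> S \<otimes> \<beta> j0 \<oplus> \<alpha> j0 \<otimes> T = \<alpha> j0 \<otimes> T \<ominus> S \<otimes> \<beta> j0"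
      using closed(3,4) by algebra
    then show ?thesis using closed(1,2) by blast
  qed
  also have "\<dots> = (\<Oplus>j\<in>J. lam j \<otimes> (\<alpha> j0 \<otimes> \<beta> j \<ominus> \<alpha> j \<otimes> \<beta> j0))"
    using J lam \<alpha> \<beta> closed by (intro finsum_elimination[symmetric]) auto
  finally show ?thesis .
qed

lemma (in domain) homogeneous_system_nontrivial_solution:
  assumes "finite K" "finite J" "card K < card J" "\<And>j k. j \<in> J \<Longrightarrow> k \<in> K \<Longrightarrow> v j k \<in> carrier R"
  shows "\<exists>lam. (\<forall>j\<in>J. lam j \<in> carrier R) \<and> (\<exists>j\<in>J. lam j \<noteq> \<zero>) \<and>
    (\<forall>k\<in>K. (\<Oplus>j\<in>J. lam j \<otimes> v j k) = \<zero>)"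
  using assms
proof (induction K arbitrary: J v rule: finite_induct)
  case empty
  then have "J \<noteq> {}" by auto
  then obtain j where "j \<in> J" by blast
  then show ?case by (intro exI[of _ "\<lambda>_. \<one>"]) auto
next
  case (insert k K J v)
  have v: "v j k' \<in> carrier R" if "j \<in> J" "k' \<in> insert k K" for j k'
    using insert.prems(3) that .
  show ?case
  proof (cases "\<forall>j\<in>J. v j k = \<zero>")
    case True
    have "\<exists>lam. (\<forall>j\<in>J. lam j \<in> carrier R) \<and> (\<exists>j\<in>J. lam j \<noteq> \<zero>) \<and>
        (\<forall>k\<in>K. (\<Oplus>j\<in>J. lam j \<otimes> v j k) = \<zero>)"
    proof (rule insert.IH[OF insert.prems(1)])
      show "card K < card J" using insert.prems(2) insert.hyps by simp
    qed (use v in auto)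
    then obtain lam where lam: "\<forall>j\<in>J. lam j \<in> carrier R" "\<exists>j\<in>J. lam j \<noteq> \<zero>"
      "\<forall>k\<in>K. (\<Oplus>j\<in>J. lam j \<otimes> v j k) = \<zero>" by blast
    have "(\<Oplus>j\<in>J. lam j \<otimes> v j k) = (\<Oplus>j\<in>J. \<zero>)"
      using True lam(1) by (intro finsum_cong') auto
    then show ?thesis using lam by auto
  next
    case False
    then obtain j0 where j0: "j0 \<in> J" "v j0 k \<noteq> \<zero>" by blast
    define J' where "J' = J - {j0}"
    have J: "J = insert j0 J'" "j0 \<notin> J'" "finite J'" "card K < card J'"
      using j0 insert unfolding J'_def by auto
    define w where "w j k' = v j0 k \<otimes> v j k' \<ominus> v j k \<otimes> v j0 k'" for j k'
    have "\<exists>lam. (\<forall>j\<in>J'. lam j \<in> carrier R) \<and> (\<exists>j\<in>J'. lam j \<noteq> \<zero>) \<and>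
        (\<forall>k'\<in>K. (\<Oplus>j\<in>J'. lam j \<otimes> w j k') = \<zero>)"
    proof (rule insert.IH[OF J(3,4)])
      show "w j k' \<in> carrier R" if "j \<in> J'" "k' \<in> K" for j k'
        unfolding w_def using that J j0 v by auto
    qed
    then obtain lam where lam: "\<forall>j\<in>J'. lam j \<in> carrier R" "\<exists>j\<in>J'. lam j \<noteq> \<zero>"
      "\<forall>k'\<in>K. (\<Oplus>j\<in>J'. lam j \<otimes> w j k') = \<zero>" by blast
    define \<mu> where "\<mu> j = (if j = j0 then \<ominus> (\<Oplus>j\<in>J'. lam j \<otimes> v j k) else v j0 k \<otimes> lam j)" for j
    have \<mu>: "(\<Oplus>j\<in>J. \<mu> j \<otimes> v j k') = (\<Oplus>j\<in>J'. lam j \<otimes> w j k')" if "k' \<in> insert k K" for k'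
      unfolding \<mu>_def w_def J(1) using J lam(1) v that by (intro pivot_identity) auto
    have "(\<Oplus>j\<in>J. \<mu> j \<otimes> v j k') = \<zero>" if k': "k' \<in> insert k K" for k'
    proof (cases "k' = k")
      case True
      have "(\<Oplus>j\<in>J'. lam j \<otimes> w j k) = (\<Oplus>j\<in>J'. \<zero>)"
        unfolding w_def using J lam(1) v by (intro finsum_cong') (auto simp: m_comm r_neg minus_eq)
      then show ?thesis using \<mu>[OF k'] True by simp
    qed (use \<mu> lam(3) k' in auto)
    moreover have "\<forall>j\<in>J. \<mu> j \<in> carrier R" using lam(1) v J by (auto simp: \<mu>_def intro!: finsum_closed)
    moreover have "\<exists>j\<in>J. \<mu> j \<noteq> \<zero>"
    proof -
      obtain j where j: "j \<in> J'" "lam j \<noteq> \<zero>" using lam(2) by blast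
      then have "\<mu> j = v j0 k \<otimes> lam j" using J by (auto simp: \<mu>_def)
      then have "\<mu> j \<noteq> \<zero>" using integral[of "v j0 k" "lam j"] j0 v j lam(1) J by auto
      then show ?thesis using j(1) J(1) by blast
    qed
    ultimately show ?thesis by blast
  qed
qed

section \<open>p-adic lattices and congruence sublattices\<close>

lemma card_image_eq_if_same_fibres:
  assumes "\<And>x y. x \<in> S \<Longrightarrow> y \<in> S \<Longrightarrow> f x = f y \<longleftrightarrow> g x = g y"
  shows "card (f ` S) = card (g ` S)"
proof -
  define h where "h z = g (SOME x. x \<in> S \<and> f x = z)" for z
  have hf: "h (f x) = g x" if "x \<in> S" for x
  proof -
    have "\<exists>x'. x' \<in> S \<and> f x' = f x" using that by blast
    then have "(SOME x'. x' \<in> S \<and> f x' = f x) \<in> S \<and> f (SOME x'. x' \<in> S \<and> f x' = f x) = f x"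
      by (rule someI_ex)
    then show ?thesis unfolding h_def using assms that by blast
  qed
  have "inj_on h (f ` S)"
    by (rule inj_onI) (auto simp: hf assms)
  moreover have "h ` f ` S = g ` S" by (auto simp: hf image_iff)
  ultimately show ?thesis by (metis card_image)
qed

locale padic_lattice = module_with_basis R L n e + padic_integers R p
  for R :: "(nat \<Rightarrow> int) ring" (structure) and L (structure) and n e p
begin

lemma smult_p_pow_p_pow: "x \<in> carrier L \<Longrightarrow> p_pow a \<odot>\<^bsub>L\<^esub> (p_pow b \<odot>\<^bsub>L\<^esub> x) = p_pow (a + b) \<odot>\<^bsub>L\<^esub> x"
  using smult_assoc1[of "p_pow a" "p_pow b" x] by (simp add: p_pow_add)

lemma p_pow_smult_cancel:
  "x \<in> carrier L \<Longrightarrow> y \<in> carrier L \<Longrightarrow> p_pow m \<odot>\<^bsub>L\<^esub> x = p_pow m \<odot>\<^bsub>L\<^esub> y \<Longrightarrow> x = y"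
  using smult_left_cancel[OF is_domain p_pow_closed p_pow_nonzero] by blast

lemma coords_p_pow_smult: "y \<in> carrier L \<Longrightarrow> i < n \<Longrightarrow> coords (p_pow m \<odot>\<^bsub>L\<^esub> y) i m = 0"
  by (simp add: coords_smult p_pow_mult_apply)

lemma p_pow_divisible:
  assumes x: "x \<in> carrier L" and div: "\<And>i. i < n \<Longrightarrow> coords x i m = 0"
  shows "lincomb (\<lambda>i. p_quotient m (coords x i)) \<in> carrier L"
    and "x = p_pow m \<odot>\<^bsub>L\<^esub> lincomb (\<lambda>i. p_quotient m (coords x i))"
proof -
  have q: "p_quotient m (coords x i) \<in> carrier R" "coords x i = p_pow m \<otimes> p_quotient m (coords x i)"
    if "i < n" for i
    using p_quotient[OF coords_closed[OF x that] div[OF that]] .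
  then show "lincomb (\<lambda>i. p_quotient m (coords x i)) \<in> carrier L" by simp
  show "x = p_pow m \<odot>\<^bsub>L\<^esub> lincomb (\<lambda>i. p_quotient m (coords x i))"
  proof (rule coords_eqI)
    fix i assume "i < n"
    then show "coords x i = coords (p_pow m \<odot>\<^bsub>L\<^esub> lincomb (\<lambda>i. p_quotient m (coords x i))) i"
      using q by (simp add: coords_smult coords_lincomb)
  qed (use x q in simp_all)
qed

text \<open>The coordinates of such an element are divisible by every power of p.\<close>
lemma self_divisible_subset_eq_zero:
  assumes S: "S \<subseteq> carrier L" and k: "0 < k"
    and div: "\<And>x. x \<in> S \<Longrightarrow> \<exists>y\<in>S. x = p_pow k \<odot>\<^bsub>L\<^esub> y" and x: "x \<in> S"
  shows "x = \<zero>\<^bsub>L\<^esub>"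
proof -
  have x_pow: "\<exists>y\<in>S. x = p_pow (j * k) \<odot>\<^bsub>L\<^esub> y" for j
  proof (induction j)
    case 0
    show ?case using x S by (intro bexI[of _ x]) (auto simp: p_pow_0)
  next
    case (Suc j)
    then obtain y where y: "y \<in> S" "x = p_pow (j * k) \<odot>\<^bsub>L\<^esub> y" by blast
    obtain z where z: "z \<in> S" "y = p_pow k \<odot>\<^bsub>L\<^esub> z" using div[OF y(1)] by blast
    have "x = p_pow (Suc j * k) \<odot>\<^bsub>L\<^esub> z"
      using y z S smult_p_pow_p_pow[of z "j * k" k] by (auto simp: add.commute)
    then show ?case using z(1) by blast
  qed
  show ?thesis
  proof (rule coords_eq_zeroI)
    show "x \<in> carrier L" using x S by blast
    fix i assume i: "i < n"
    have "coords x i j = 0" for j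
    proof -
      obtain y where "y \<in> S" "x = p_pow (j * k) \<odot>\<^bsub>L\<^esub> y" using x_pow[of j] by blast
      then have "coords x i (j * k) = 0" using coords_p_pow_smult i S by auto
      moreover have "j \<le> j * k" using k by simp
      ultimately show ?thesis using residue_compat[of "coords x i" j "j * k"] x S i by auto
    qed
    then show "coords x i = \<zero>" by (auto simp: zero_eq)
  qed
qed

definition congruence_sublattice :: "(nat \<Rightarrow> nat) \<Rightarrow> 'a set" where
  "congruence_sublattice m = {x \<in> carrier L. \<forall>i<n. coords x i (m i) = 0}"

lemma congruence_sublattice_submodule: "submodule (congruence_sublattice m) R L"
proof -
  have smult: "a \<odot>\<^bsub>L\<^esub> x \<in> congruence_sublattice m" if "a \<in> carrier R" "x \<in> congruence_sublattice m" for a x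
    using that unfolding congruence_sublattice_def by (auto simp: coords_smult mult_apply)
  show ?thesis
  proof (rule submoduleI)
    show "\<zero>\<^bsub>L\<^esub> \<in> congruence_sublattice m"
      unfolding congruence_sublattice_def by (auto simp: coords_zero zero_eq)
    fix x y assume x: "x \<in> congruence_sublattice m" and y: "y \<in> congruence_sublattice m"
    then show "x \<oplus>\<^bsub>L\<^esub> y \<in> congruence_sublattice m"
      unfolding congruence_sublattice_def by (auto simp: coords_add add_apply)
    have "x \<in> carrier L" using x unfolding congruence_sublattice_def by simp
    then have "\<ominus>\<^bsub>L\<^esub> x = (\<ominus> \<one>) \<odot>\<^bsub>L\<^esub> x" by (simp add: smult_l_minus)
    then show "\<ominus>\<^bsub>L\<^esub> x \<in> congruence_sublattice m" using smult[OF _ x, of "\<ominus> \<one>"] by simp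
  next
    show "congruence_sublattice m \<subseteq> carrier L" by (auto simp: congruence_sublattice_def)
  qed (rule smult)
qed

lemma rcos_congruence_sublattice_eq_iff:
  assumes x: "x \<in> carrier L" and y: "y \<in> carrier L"
  shows "congruence_sublattice m +>\<^bsub>L\<^esub> x = congruence_sublattice m +>\<^bsub>L\<^esub> y
    \<longleftrightarrow> (\<forall>i<n. coords x i (m i) = coords y i (m i))"
proof -
  interpret H: abelian_subgroup "congruence_sublattice m" L
    using submodule.axioms(1)[OF congruence_sublattice_submodule] M.abelian_group_axioms
    by (intro abelian_subgroupI3) (simp_all add: additive_subgroup_def)
  have "congruence_sublattice m +>\<^bsub>L\<^esub> x = congruence_sublattice m +>\<^bsub>L\<^esub> y
      \<longleftrightarrow> y \<in> congruence_sublattice m +>\<^bsub>L\<^esub> x"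
    using H.a_repr_independence' H.a_repr_independenceD x y by blast
  also have "\<dots> \<longleftrightarrow> y \<ominus>\<^bsub>L\<^esub> x \<in> congruence_sublattice m"
    using H.a_rcos_module[OF x y] by (simp add: M.minus_eq)
  also have "\<dots> \<longleftrightarrow> (\<forall>i<n. coords x i (m i) = coords y i (m i))"
    using x y unfolding congruence_sublattice_def
    by (auto simp: coords_minus minus_apply_eq_0_iff)
  finally show ?thesis .
qed

lemma residue_vectors_image:
  "(\<lambda>x. \<lambda>i\<in>{..<n}. coords x i (m i)) ` carrier L = (\<Pi>\<^sub>E i\<in>{..<n}. {0..<int p ^ m i})"
    (is "?res ` carrier L = ?P")
proof
  show "?res ` carrier L \<subseteq> ?P"
  proof (rule image_subsetI)
    fix x assume x: "x \<in> carrier L"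
    show "?res x \<in> ?P"
      unfolding restrict_PiE_iff using residue_bounds[OF coords_closed[OF x]] by auto
  qed
next
  show "?P \<subseteq> ?res ` carrier L"
  proof
    fix r assume r: "r \<in> ?P"
    define c where "c i = (\<lambda>l. r i mod int p ^ l)" for i
    have c: "c i \<in> carrier R" for i unfolding c_def by (rule residues_of_int_closed)
    have "?res (lincomb c) = r"
    proof
      fix i
      show "?res (lincomb c) i = r i"
      proof (cases "i < n")
        case True
        then show ?thesis using r coords_lincomb[of c, OF c] by (auto simp: c_def PiE_iff)
      next
        case False
        then show ?thesis using PiE_arb[OF r, of i] by simp
      qed
    qed
    moreover have "lincomb c \<in> carrier L" using c by simp
    ultimately show "r \<in> ?res ` carrier L" by (rule image_eqI[OF sym])
  qed
qed

lemma card_rcosets_congruence_sublattice: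
  "card (a_rcosets\<^bsub>L\<^esub> (congruence_sublattice m)) = (\<Prod>i<n. p ^ m i)"
proof -
  let ?res = "\<lambda>x. \<lambda>i\<in>{..<n}. coords x i (m i)"
  have "a_rcosets\<^bsub>L\<^esub> (congruence_sublattice m) = (\<lambda>x. congruence_sublattice m +>\<^bsub>L\<^esub> x) ` carrier L"
    unfolding A_RCOSETS_def' by auto
  also have "card \<dots> = card (?res ` carrier L)"
  proof (rule card_image_eq_if_same_fibres)
    fix x y assume x: "x \<in> carrier L" and y: "y \<in> carrier L"
    have "?res x = ?res y \<longleftrightarrow> (\<forall>i<n. coords x i (m i) = coords y i (m i))"
    proof
      assume eq: "?res x = ?res y"
      show "\<forall>i<n. coords x i (m i) = coords y i (m i)"
      proof (intro allI impI)
        fix i assume "i < n"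
        then show "coords x i (m i) = coords y i (m i)" using fun_cong[OF eq, of i] by simp
      qed
    qed (intro restrict_ext, simp)
    then show "congruence_sublattice m +>\<^bsub>L\<^esub> x = congruence_sublattice m +>\<^bsub>L\<^esub> y \<longleftrightarrow> ?res x = ?res y"
      using rcos_congruence_sublattice_eq_iff[OF x y] by simp
  qed
  also have "\<dots> = card (\<Pi>\<^sub>E i\<in>{..<n}. {0..<int p ^ m i})" by (simp only: residue_vectors_image)
  also have "\<dots> = (\<Prod>i<n. p ^ m i)" by (simp add: card_PiE nat_power_eq)
  finally show ?thesis .
qed

lemma finite_rcosets_congruence_sublattice: "finite (a_rcosets\<^bsub>L\<^esub> (congruence_sublattice m))"
proof -
  have "0 < p" using prime_p prime_gt_0_nat by blast
  then have "0 < card (a_rcosets\<^bsub>L\<^esub> (congruence_sublattice m))"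
    unfolding card_rcosets_congruence_sublattice by (intro prod_pos) simp
  then show ?thesis using card.infinite by force
qed

end

section \<open>Lie lattices and simple virtual endomorphisms\<close>

lemma funpow_mem: "f ` I \<subseteq> I \<Longrightarrow> x \<in> I \<Longrightarrow> (f ^^ j) x \<in> I"
  by (induction j) auto

locale lie_alg = module R L for R (structure) and L (structure) +
  fixes br :: "'a \<Rightarrow> 'a \<Rightarrow> 'a"
  assumes lie: "lie_algebra R L br"
begin

lemma bracket_closed [simp]: "x \<in> carrier L \<Longrightarrow> y \<in> carrier L \<Longrightarrow> br x y \<in> carrier L"
  using lie unfolding lie_algebra_def by blast

lemma bracket_add_left:
  "x \<in> carrier L \<Longrightarrow> y \<in> carrier L \<Longrightarrow> z \<in> carrier L \<Longrightarrow> br (x \<oplus>\<^bsub>L\<^esub> y) z = br x z \<oplus>\<^bsub>L\<^esub> br y z"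
  using lie unfolding lie_algebra_def by blast

lemma bracket_add_right:
  "x \<in> carrier L \<Longrightarrow> y \<in> carrier L \<Longrightarrow> z \<in> carrier L \<Longrightarrow> br x (y \<oplus>\<^bsub>L\<^esub> z) = br x y \<oplus>\<^bsub>L\<^esub> br x z"
  using lie unfolding lie_algebra_def by blast

lemma bracket_smult_left:
  "a \<in> carrier R \<Longrightarrow> x \<in> carrier L \<Longrightarrow> y \<in> carrier L \<Longrightarrow> br (a \<odot>\<^bsub>L\<^esub> x) y = a \<odot>\<^bsub>L\<^esub> br x y"
  using lie unfolding lie_algebra_def by blast

lemma bracket_smult_right:
  "a \<in> carrier R \<Longrightarrow> x \<in> carrier L \<Longrightarrow> y \<in> carrier L \<Longrightarrow> br x (a \<odot>\<^bsub>L\<^esub> y) = a \<odot>\<^bsub>L\<^esub> br x y"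
  using lie unfolding lie_algebra_def by blast

lemma bracket_self [simp]: "x \<in> carrier L \<Longrightarrow> br x x = \<zero>\<^bsub>L\<^esub>"
  using lie unfolding lie_algebra_def by blast

lemma bracket_antisym:
  assumes x: "x \<in> carrier L" and y: "y \<in> carrier L"
  shows "br y x = \<ominus>\<^bsub>L\<^esub> br x y"
proof -
  have "\<zero>\<^bsub>L\<^esub> = br (x \<oplus>\<^bsub>L\<^esub> y) (x \<oplus>\<^bsub>L\<^esub> y)" using x y by simp
  also have "\<dots> = (br x x \<oplus>\<^bsub>L\<^esub> br y x) \<oplus>\<^bsub>L\<^esub> (br x y \<oplus>\<^bsub>L\<^esub> br y y)"
    using x y by (simp add: bracket_add_left bracket_add_right del: bracket_self)
  also have "\<dots> = br y x \<oplus>\<^bsub>L\<^esub> br x y" using x y by simp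
  finally show ?thesis using x y by (intro M.minus_equality[symmetric]) auto
qed

lemma phi_invariant_subset_domain: "phi_invariant L M \<phi> I \<Longrightarrow> I \<subseteq> M"
proof -
  assume "phi_invariant L M \<phi> I"
  then have "I \<subseteq> pow_dom L M \<phi> (Suc 0)" unfolding phi_invariant_def by blast
  then show "I \<subseteq> M" by auto
qed

lemma simple_virtual_endoI:
  assumes endo: "virtual_endo R L br M \<phi>"
    and trivial: "\<And>I x. lie_ideal R L br I \<Longrightarrow> I \<subseteq> M \<Longrightarrow> \<phi> ` I \<subseteq> I \<Longrightarrow> x \<in> I \<Longrightarrow> x = \<zero>\<^bsub>L\<^esub>"
  shows "simple_virtual_endo R L br M \<phi>"
  unfolding simple_virtual_endo_def
proof (intro conjI allI impI endo)
  fix I assume I: "lie_ideal R L br I \<and> phi_invariant L M \<phi> I"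
  then have "I \<subseteq> M" using phi_invariant_subset_domain by blast
  moreover have "\<phi> ` I \<subseteq> I" using I unfolding phi_invariant_def by blast
  ultimately have "I \<subseteq> {\<zero>\<^bsub>L\<^esub>}" using trivial I by blast
  moreover have "\<zero>\<^bsub>L\<^esub> \<in> I"
    using I submodule_zero_closed unfolding lie_ideal_def by blast
  ultimately show "I = {\<zero>\<^bsub>L\<^esub>}" by blast
qed

end

locale padic_lie_lattice = padic_lattice + lie_alg R L br for br

section \<open>Abelian lattices\<close>

context padic_lie_lattice
begin

context
  fixes d m :: nat
  assumes n_eq: "n = Suc d" and m_pos: "0 < m"
begin

definition shift_domain :: "'a set" where
  "shift_domain = congruence_sublattice (\<lambda>i. if i = d then m else 0)"

definition shift_coords :: "'a \<Rightarrow> nat \<Rightarrow> nat \<Rightarrow> int" where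
  "shift_coords x i = (if i = 0 then p_quotient m (coords x d) else coords x (i - 1))"

definition shift :: "'a \<Rightarrow> 'a" where
  "shift x = lincomb (shift_coords x)"

lemma d_less_n: "d < n"
  using n_eq by simp

lemma shift_domain_iff: "x \<in> shift_domain \<longleftrightarrow> x \<in> carrier L \<and> coords x d m = 0"
  unfolding shift_domain_def congruence_sublattice_def using d_less_n
  by (auto simp: residue_0)

lemma shift_domain_submodule: "submodule shift_domain R L"
  unfolding shift_domain_def by (rule congruence_sublattice_submodule)

lemma shift_coords_closed:
  assumes x: "x \<in> shift_domain" and i: "i < n"
  shows "shift_coords x i \<in> carrier R"
proof -
  have "x \<in> carrier L" "coords x d m = 0" using x by (simp_all add: shift_domain_iff)
  then show ?thesis using i d_less_n p_quotient(1)[of "coords x d" m] by (auto simp: shift_coords_def)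
qed

lemma shift_closed: "x \<in> shift_domain \<Longrightarrow> shift x \<in> carrier L"
  unfolding shift_def using shift_coords_closed by simp

lemma coords_shift: "x \<in> shift_domain \<Longrightarrow> i < n \<Longrightarrow> coords (shift x) i = shift_coords x i"
  unfolding shift_def using shift_coords_closed by (intro coords_lincomb) auto

lemma shift_add:
  assumes x: "x \<in> shift_domain" and y: "y \<in> shift_domain"
  shows "shift (x \<oplus>\<^bsub>L\<^esub> y) = shift x \<oplus>\<^bsub>L\<^esub> shift y"
proof -
  have xL: "x \<in> carrier L" "coords x d m = 0" and yL: "y \<in> carrier L" "coords y d m = 0"
    using x y by (auto simp: shift_domain_iff)
  have "shift_coords (x \<oplus>\<^bsub>L\<^esub> y) i = shift_coords x i \<oplus> shift_coords y i" if "i < n" for i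
  proof (cases "i = 0")
    case True
    then show ?thesis
      using xL yL d_less_n by (simp add: shift_coords_def coords_add p_quotient_add)
  next
    case False
    then show ?thesis using xL yL that by (simp add: shift_coords_def coords_add)
  qed
  then have "shift (x \<oplus>\<^bsub>L\<^esub> y) = lincomb (\<lambda>i. shift_coords x i \<oplus> shift_coords y i)"
    unfolding shift_def using shift_coords_closed x y by (intro lincomb_cong) auto
  also have "\<dots> = shift x \<oplus>\<^bsub>L\<^esub> shift y"
    unfolding shift_def using shift_coords_closed x y by (intro lincomb_add) auto
  finally show ?thesis .
qed

lemma shift_smult:
  assumes a: "a \<in> carrier R" and x: "x \<in> shift_domain"
  shows "shift (a \<odot>\<^bsub>L\<^esub> x) = a \<odot>\<^bsub>L\<^esub> shift x"
proof -
  have xL: "x \<in> carrier L" "coords x d m = 0" using x by (auto simp: shift_domain_iff)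
  have "shift_coords (a \<odot>\<^bsub>L\<^esub> x) i = a \<otimes> shift_coords x i" if "i < n" for i
  proof (cases "i = 0")
    case True
    then show ?thesis
      using a xL d_less_n by (simp add: shift_coords_def coords_smult p_quotient_mult)
  next
    case False
    then show ?thesis using a xL that by (simp add: shift_coords_def coords_smult)
  qed
  then have "shift (a \<odot>\<^bsub>L\<^esub> x) = lincomb (\<lambda>i. a \<otimes> shift_coords x i)"
    unfolding shift_def using shift_coords_closed a x by (intro lincomb_cong) auto
  also have "\<dots> = a \<odot>\<^bsub>L\<^esub> shift x"
    unfolding shift_def using shift_coords_closed a x by (intro lincomb_smult) auto
  finally show ?thesis .
qed

lemma coords_shift_iterate:
  assumes iter: "\<And>j. (shift ^^ j) x \<in> shift_domain"
  shows "j \<le> Suc d \<Longrightarrow> i \<le> d \<Longrightarrow> coords ((shift ^^ j) x) i =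
     (if j \<le> i then coords x (i - j) else p_quotient m (coords x (Suc d + i - j)))"
proof (induction j arbitrary: i)
  case (Suc j)
  have "i < n" using Suc.prems d_less_n by linarith
  then have "coords ((shift ^^ Suc j) x) i = shift_coords ((shift ^^ j) x) i"
    using coords_shift[OF iter[of j], of i] by simp
  also have "\<dots> = (if Suc j \<le> i then coords x (i - Suc j)
      else p_quotient m (coords x (Suc d + i - Suc j)))"
  proof (cases "i = 0")
    case True
    then show ?thesis using Suc.IH[of d] Suc.prems by (simp add: shift_coords_def)
  next
    case False
    then show ?thesis using Suc.IH[of "i - 1"] Suc.prems by (auto simp: shift_coords_def Suc_diff_Suc)
  qed
  finally show ?case .
qed simp

lemma eq_p_pow_smult_shift_iterate:
  assumes iter: "\<And>j. (shift ^^ j) x \<in> shift_domain"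
  shows "x = p_pow m \<odot>\<^bsub>L\<^esub> (shift ^^ Suc d) x"
proof (rule coords_eqI)
  have xL: "x \<in> carrier L" using iter[of 0] by (simp add: shift_domain_iff)
  have yL: "(shift ^^ Suc d) x \<in> carrier L" using iter[of "Suc d"] by (simp add: shift_domain_iff)
  show "x \<in> carrier L" "p_pow m \<odot>\<^bsub>L\<^esub> (shift ^^ Suc d) x \<in> carrier L" using xL yL by auto
  fix i assume "i < n"
  then have i: "i \<le> d" using n_eq by linarith
  have "coords x i = coords ((shift ^^ (d - i)) x) d"
    using coords_shift_iterate[OF iter, of "d - i" d] i by simp
  then have "coords x i m = 0" using iter[of "d - i"] by (simp add: shift_domain_iff)
  then have "coords x i = p_pow m \<otimes> p_quotient m (coords x i)"
    using p_quotient(2) xL \<open>i < n\<close> by simp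
  also have "\<dots> = coords (p_pow m \<odot>\<^bsub>L\<^esub> (shift ^^ Suc d) x) i"
    using coords_shift_iterate[OF iter, of "Suc d" i] i yL \<open>i < n\<close> by (simp add: coords_smult)
  finally show "coords x i = coords (p_pow m \<odot>\<^bsub>L\<^esub> (shift ^^ Suc d) x) i" .
qed

lemma shift_virtual_endo:
  assumes abelian: "\<And>x y. x \<in> carrier L \<Longrightarrow> y \<in> carrier L \<Longrightarrow> br x y = \<zero>\<^bsub>L\<^esub>"
  shows "virtual_endo R L br shift_domain shift"
  unfolding virtual_endo_def lie_subalgebra_def
proof (intro conjI ballI shift_domain_submodule)
  have domL: "x \<in> shift_domain \<Longrightarrow> x \<in> carrier L" for x by (simp add: shift_domain_iff)
  have shift_zero: "shift \<zero>\<^bsub>L\<^esub> = \<zero>\<^bsub>L\<^esub>"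
    using shift_smult[of \<zero> "\<zero>\<^bsub>L\<^esub>"] submodule_zero_closed[OF shift_domain_submodule]
      shift_closed by simp
  show "finite (a_rcosets\<^bsub>L\<^esub> shift_domain)"
    unfolding shift_domain_def by (rule finite_rcosets_congruence_sublattice)
  fix x y assume x: "x \<in> shift_domain" and y: "y \<in> shift_domain"
  show "br x y \<in> shift_domain"
    using abelian domL x y submodule_zero_closed[OF shift_domain_submodule] by simp
  show "shift (br x y) = br (shift x) (shift y)"
    using abelian domL x y shift_closed shift_zero by simp
  show "shift (x \<oplus>\<^bsub>L\<^esub> y) = shift x \<oplus>\<^bsub>L\<^esub> shift y" by (rule shift_add[OF x y])
next
  fix x assume "x \<in> shift_domain"
  then show "shift x \<in> carrier L" by (rule shift_closed)
next
  fix a x assume "a \<in> carrier R" "x \<in> shift_domain"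
  then show "shift (a \<odot>\<^bsub>L\<^esub> x) = a \<odot>\<^bsub>L\<^esub> shift x" by (rule shift_smult)
qed

lemma shift_invariant_ideal_trivial:
  assumes I: "lie_ideal R L br I" "I \<subseteq> shift_domain" "shift ` I \<subseteq> I" and x: "x \<in> I"
  shows "x = \<zero>\<^bsub>L\<^esub>"
proof (rule self_divisible_subset_eq_zero[OF _ m_pos _ x])
  show "I \<subseteq> carrier L" using I(2) by (auto simp: shift_domain_iff)
  fix y assume y: "y \<in> I"
  have "(shift ^^ j) y \<in> I" for j using funpow_mem[OF I(3) y] .
  then show "\<exists>z\<in>I. y = p_pow m \<odot>\<^bsub>L\<^esub> z"
    using eq_p_pow_smult_shift_iterate[of y] I(2) by blast
qed

lemma index_shift_domain: "lattice_index L shift_domain = p ^ m"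
proof -
  have "(\<Prod>i<n. p ^ (if i = d then m else 0)) = (\<Prod>i\<in>{d}. p ^ m)"
    using d_less_n by (intro prod.mono_neutral_cong_right) auto
  then show ?thesis
    unfolding lattice_index_def shift_domain_def card_rcosets_congruence_sublattice by simp
qed

end

lemma abelian_self_similar:
  assumes abelian: "\<And>x y. x \<in> carrier L \<Longrightarrow> y \<in> carrier L \<Longrightarrow> br x y = \<zero>\<^bsub>L\<^esub>"
    and n: "n = Suc d" and m: "0 < m"
  shows "\<exists>M \<phi>. simple_virtual_endo R L br M \<phi> \<and> lattice_index L M = p ^ m"
proof (intro exI conjI)
  show "simple_virtual_endo R L br (shift_domain d m) (shift d m)"
    using shift_invariant_ideal_trivial[OF n m]
    by (intro simple_virtual_endoI[OF shift_virtual_endo[OF n m abelian]]) blast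
  show "lattice_index L (shift_domain d m) = p ^ m" by (rule index_shift_domain[OF n m])
qed

end

section \<open>The virtual endomorphism of a splitting L = R t + ker F\<close>

locale abelian_splitting = padic_lie_lattice +
  fixes F :: "'a \<Rightarrow> nat \<Rightarrow> int" and t :: 'a
  assumes F_closed [simp]: "x \<in> carrier L \<Longrightarrow> F x \<in> carrier R"
    and F_add: "x \<in> carrier L \<Longrightarrow> y \<in> carrier L \<Longrightarrow> F (x \<oplus>\<^bsub>L\<^esub> y) = F x \<oplus> F y"
    and F_smult: "c \<in> carrier R \<Longrightarrow> x \<in> carrier L \<Longrightarrow> F (c \<odot>\<^bsub>L\<^esub> x) = c \<otimes> F x"
    and t_closed [simp]: "t \<in> carrier L" and F_t: "F t = \<one>"
    and kernel_abelian:
      "x \<in> carrier L \<Longrightarrow> F x = \<zero> \<Longrightarrow> y \<in> carrier L \<Longrightarrow> F y = \<zero> \<Longrightarrow> br x y = \<zero>\<^bsub>L\<^esub>"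
    and kernel_ideal: "z \<in> carrier L \<Longrightarrow> x \<in> carrier L \<Longrightarrow> F x = \<zero> \<Longrightarrow> F (br z x) = \<zero>"
begin

definition hyperplane :: "'a set" where
  "hyperplane = {x \<in> carrier L. F x = \<zero>}"

lemma hyperplane_iff: "x \<in> hyperplane \<longleftrightarrow> x \<in> carrier L \<and> F x = \<zero>"
  by (simp add: hyperplane_def)

lemma hyperplane_carrier: "x \<in> hyperplane \<Longrightarrow> x \<in> carrier L"
  by (simp add: hyperplane_def)

lemma hyperplane_submodule: "submodule hyperplane R L"
proof (rule submoduleI)
  show "\<zero>\<^bsub>L\<^esub> \<in> hyperplane" using F_smult[of \<zero> "\<zero>\<^bsub>L\<^esub>"] by (simp add: hyperplane_iff)
  fix x y assume x: "x \<in> hyperplane" and y: "y \<in> hyperplane"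
  have "\<ominus>\<^bsub>L\<^esub> x = (\<ominus> \<one>) \<odot>\<^bsub>L\<^esub> x" using x by (simp add: hyperplane_iff smult_l_minus)
  then show "\<ominus>\<^bsub>L\<^esub> x \<in> hyperplane" using x F_smult[of "\<ominus> \<one>" x] by (simp add: hyperplane_iff)
  show "x \<oplus>\<^bsub>L\<^esub> y \<in> hyperplane" using x y by (simp add: hyperplane_iff F_add)
  fix c assume "c \<in> carrier R"
  then show "c \<odot>\<^bsub>L\<^esub> x \<in> hyperplane" using x by (simp add: hyperplane_iff F_smult)
qed (auto simp: hyperplane_iff)

lemma hyperplane_smult: "c \<in> carrier R \<Longrightarrow> w \<in> hyperplane \<Longrightarrow> c \<odot>\<^bsub>L\<^esub> w \<in> hyperplane"
  using submoduleE(4)[OF hyperplane_submodule] by blast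

lemma hyperplane_add: "w \<in> hyperplane \<Longrightarrow> w' \<in> hyperplane \<Longrightarrow> w \<oplus>\<^bsub>L\<^esub> w' \<in> hyperplane"
  using submoduleE(5)[OF hyperplane_submodule] by blast

lemma F_line_plus: "c \<in> carrier R \<Longrightarrow> w \<in> hyperplane \<Longrightarrow> F (c \<odot>\<^bsub>L\<^esub> t \<oplus>\<^bsub>L\<^esub> w) = c"
  by (simp add: hyperplane_iff F_add F_smult F_t)

lemma line_plus_minus: "c \<in> carrier R \<Longrightarrow> w \<in> carrier L \<Longrightarrow> (c \<odot>\<^bsub>L\<^esub> t \<oplus>\<^bsub>L\<^esub> w) \<ominus>\<^bsub>L\<^esub> c \<odot>\<^bsub>L\<^esub> t = w"
  by (simp add: M.minus_eq M.a_ac M.r_neg)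

lemma decomposition:
  assumes x: "x \<in> carrier L"
  shows "x \<ominus>\<^bsub>L\<^esub> F x \<odot>\<^bsub>L\<^esub> t \<in> hyperplane" and "x = F x \<odot>\<^bsub>L\<^esub> t \<oplus>\<^bsub>L\<^esub> (x \<ominus>\<^bsub>L\<^esub> F x \<odot>\<^bsub>L\<^esub> t)"
proof -
  have Fx: "F x \<in> carrier R" using x by simp
  have "x \<ominus>\<^bsub>L\<^esub> F x \<odot>\<^bsub>L\<^esub> t = x \<oplus>\<^bsub>L\<^esub> (\<ominus> F x) \<odot>\<^bsub>L\<^esub> t"
    using Fx by (simp add: M.minus_eq smult_l_minus)
  then have "F (x \<ominus>\<^bsub>L\<^esub> F x \<odot>\<^bsub>L\<^esub> t) = F x \<ominus> F x"
    using x Fx by (simp add: F_add F_smult F_t R.minus_eq)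
  then show "x \<ominus>\<^bsub>L\<^esub> F x \<odot>\<^bsub>L\<^esub> t \<in> hyperplane" using x Fx by (simp add: hyperplane_iff R.r_neg R.minus_eq)
  show "x = F x \<odot>\<^bsub>L\<^esub> t \<oplus>\<^bsub>L\<^esub> (x \<ominus>\<^bsub>L\<^esub> F x \<odot>\<^bsub>L\<^esub> t)"
    using x Fx by (simp add: M.minus_eq M.a_ac M.r_neg)
qed

lemma bracket_line_plus:
  assumes c: "c \<in> carrier R" "c' \<in> carrier R" and w: "w \<in> hyperplane" "w' \<in> hyperplane"
  shows "br (c \<odot>\<^bsub>L\<^esub> t \<oplus>\<^bsub>L\<^esub> w) (c' \<odot>\<^bsub>L\<^esub> t \<oplus>\<^bsub>L\<^esub> w') = c \<odot>\<^bsub>L\<^esub> br t w' \<oplus>\<^bsub>L\<^esub> c' \<odot>\<^bsub>L\<^esub> br w t"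
proof -
  have wL: "w \<in> carrier L" "w' \<in> carrier L" using w by (auto simp: hyperplane_iff)
  have "br (c \<odot>\<^bsub>L\<^esub> t \<oplus>\<^bsub>L\<^esub> w) (c' \<odot>\<^bsub>L\<^esub> t \<oplus>\<^bsub>L\<^esub> w') =
      (br (c \<odot>\<^bsub>L\<^esub> t) (c' \<odot>\<^bsub>L\<^esub> t) \<oplus>\<^bsub>L\<^esub> br (c \<odot>\<^bsub>L\<^esub> t) w') \<oplus>\<^bsub>L\<^esub> (br w (c' \<odot>\<^bsub>L\<^esub> t) \<oplus>\<^bsub>L\<^esub> br w w')"
    using c wL by (simp add: bracket_add_left bracket_add_right M.a_ac)
  also have "br (c \<odot>\<^bsub>L\<^esub> t) (c' \<odot>\<^bsub>L\<^esub> t) = \<zero>\<^bsub>L\<^esub>"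
    using c by (simp add: bracket_smult_left bracket_smult_right)
  also have "br w w' = \<zero>\<^bsub>L\<^esub>" using w by (simp add: hyperplane_iff kernel_abelian)
  finally show ?thesis using c wL by (simp add: bracket_smult_left bracket_smult_right)
qed

lemma bracket_hyperplane_line:
  assumes "c \<in> carrier R" "c' \<in> carrier R" "w \<in> hyperplane" "w' \<in> hyperplane"
  shows "c \<odot>\<^bsub>L\<^esub> br t w' \<oplus>\<^bsub>L\<^esub> c' \<odot>\<^bsub>L\<^esub> br w t \<in> hyperplane"
proof -
  have "br t w' \<in> hyperplane" using assms by (simp add: hyperplane_iff kernel_ideal)
  then have 1: "c \<odot>\<^bsub>L\<^esub> br t w' \<in> hyperplane" using assms(1) by (rule hyperplane_smult[rotated])
  have "br t w \<in> hyperplane" using assms by (simp add: hyperplane_iff kernel_ideal)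
  then have "\<ominus>\<^bsub>L\<^esub> br t w \<in> hyperplane" by (rule submoduleE(3)[OF hyperplane_submodule])
  moreover have "br w t = \<ominus>\<^bsub>L\<^esub> br t w" using assms(3) by (intro bracket_antisym) (simp_all add: hyperplane_iff)
  ultimately have 2: "c' \<odot>\<^bsub>L\<^esub> br w t \<in> hyperplane" using assms(2) hyperplane_smult by simp
  show ?thesis using 1 2 by (rule hyperplane_add)
qed

definition split_domain :: "nat \<Rightarrow> 'a set" where
  "split_domain k = {c \<odot>\<^bsub>L\<^esub> t \<oplus>\<^bsub>L\<^esub> p_pow k \<odot>\<^bsub>L\<^esub> w | c w. c \<in> carrier R \<and> w \<in> hyperplane}"

definition split_endo :: "nat \<Rightarrow> 'a \<Rightarrow> 'a" where
  "split_endo k x = F x \<odot>\<^bsub>L\<^esub> t \<oplus>\<^bsub>L\<^esub> (SOME w. w \<in> carrier L \<and> x \<ominus>\<^bsub>L\<^esub> F x \<odot>\<^bsub>L\<^esub> t = p_pow k \<odot>\<^bsub>L\<^esub> w)"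

lemma split_domainI:
  "c \<in> carrier R \<Longrightarrow> w \<in> hyperplane \<Longrightarrow> c \<odot>\<^bsub>L\<^esub> t \<oplus>\<^bsub>L\<^esub> p_pow k \<odot>\<^bsub>L\<^esub> w \<in> split_domain k"
  unfolding split_domain_def by blast

lemma split_domainE:
  assumes "x \<in> split_domain k"
  obtains c w where "c \<in> carrier R" "w \<in> hyperplane" "x = c \<odot>\<^bsub>L\<^esub> t \<oplus>\<^bsub>L\<^esub> p_pow k \<odot>\<^bsub>L\<^esub> w"
  using assms unfolding split_domain_def by blast

lemma split_endo_eq:
  assumes c: "c \<in> carrier R" and w: "w \<in> hyperplane"
  shows "split_endo k (c \<odot>\<^bsub>L\<^esub> t \<oplus>\<^bsub>L\<^esub> p_pow k \<odot>\<^bsub>L\<^esub> w) = c \<odot>\<^bsub>L\<^esub> t \<oplus>\<^bsub>L\<^esub> w"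
proof -
  have wL: "w \<in> carrier L" using w by (rule hyperplane_carrier)
  have F: "F (c \<odot>\<^bsub>L\<^esub> t \<oplus>\<^bsub>L\<^esub> p_pow k \<odot>\<^bsub>L\<^esub> w) = c"
    using c hyperplane_smult[OF p_pow_closed w] by (rule F_line_plus)
  have diff: "(c \<odot>\<^bsub>L\<^esub> t \<oplus>\<^bsub>L\<^esub> p_pow k \<odot>\<^bsub>L\<^esub> w) \<ominus>\<^bsub>L\<^esub> c \<odot>\<^bsub>L\<^esub> t = p_pow k \<odot>\<^bsub>L\<^esub> w"
    using c wL by (simp add: line_plus_minus)
  have "(SOME w'. w' \<in> carrier L \<and> p_pow k \<odot>\<^bsub>L\<^esub> w = p_pow k \<odot>\<^bsub>L\<^esub> w') = w"
  proof (rule some_equality)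
    show "\<And>w'. w' \<in> carrier L \<and> p_pow k \<odot>\<^bsub>L\<^esub> w = p_pow k \<odot>\<^bsub>L\<^esub> w' \<Longrightarrow> w' = w"
      using wL p_pow_smult_cancel by metis
  qed (use wL in simp)
  then show ?thesis unfolding split_endo_def F diff by simp
qed

lemma split_domain_add:
  assumes "c \<in> carrier R" "c' \<in> carrier R" "w \<in> hyperplane" "w' \<in> hyperplane"
  shows "(c \<odot>\<^bsub>L\<^esub> t \<oplus>\<^bsub>L\<^esub> p_pow k \<odot>\<^bsub>L\<^esub> w) \<oplus>\<^bsub>L\<^esub> (c' \<odot>\<^bsub>L\<^esub> t \<oplus>\<^bsub>L\<^esub> p_pow k \<odot>\<^bsub>L\<^esub> w')
    = (c \<oplus> c') \<odot>\<^bsub>L\<^esub> t \<oplus>\<^bsub>L\<^esub> p_pow k \<odot>\<^bsub>L\<^esub> (w \<oplus>\<^bsub>L\<^esub> w')"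
  using assms hyperplane_carrier by (simp add: smult_l_distr smult_r_distr M.a_ac)

lemma split_domain_smult:
  assumes "a \<in> carrier R" "c \<in> carrier R" "w \<in> hyperplane"
  shows "a \<odot>\<^bsub>L\<^esub> (c \<odot>\<^bsub>L\<^esub> t \<oplus>\<^bsub>L\<^esub> p_pow k \<odot>\<^bsub>L\<^esub> w) = (a \<otimes> c) \<odot>\<^bsub>L\<^esub> t \<oplus>\<^bsub>L\<^esub> p_pow k \<odot>\<^bsub>L\<^esub> (a \<odot>\<^bsub>L\<^esub> w)"
  using assms hyperplane_carrier
  by (simp add: smult_r_distr smult_assoc1[symmetric] R.m_comm[of a "p_pow k"])

lemma split_domain_bracket:
  assumes c: "c \<in> carrier R" "c' \<in> carrier R" and w: "w \<in> hyperplane" "w' \<in> hyperplane"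
  shows "br (c \<odot>\<^bsub>L\<^esub> t \<oplus>\<^bsub>L\<^esub> p_pow k \<odot>\<^bsub>L\<^esub> w) (c' \<odot>\<^bsub>L\<^esub> t \<oplus>\<^bsub>L\<^esub> p_pow k \<odot>\<^bsub>L\<^esub> w')
    = \<zero> \<odot>\<^bsub>L\<^esub> t \<oplus>\<^bsub>L\<^esub> p_pow k \<odot>\<^bsub>L\<^esub> (c \<odot>\<^bsub>L\<^esub> br t w' \<oplus>\<^bsub>L\<^esub> c' \<odot>\<^bsub>L\<^esub> br w t)"
proof -
  have wL: "w \<in> carrier L" "w' \<in> carrier L" using w hyperplane_carrier by auto
  have "br (c \<odot>\<^bsub>L\<^esub> t \<oplus>\<^bsub>L\<^esub> p_pow k \<odot>\<^bsub>L\<^esub> w) (c' \<odot>\<^bsub>L\<^esub> t \<oplus>\<^bsub>L\<^esub> p_pow k \<odot>\<^bsub>L\<^esub> w')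
      = c \<odot>\<^bsub>L\<^esub> br t (p_pow k \<odot>\<^bsub>L\<^esub> w') \<oplus>\<^bsub>L\<^esub> c' \<odot>\<^bsub>L\<^esub> br (p_pow k \<odot>\<^bsub>L\<^esub> w) t"
    using c w hyperplane_smult by (intro bracket_line_plus) auto
  also have "\<dots> = p_pow k \<odot>\<^bsub>L\<^esub> (c \<odot>\<^bsub>L\<^esub> br t w' \<oplus>\<^bsub>L\<^esub> c' \<odot>\<^bsub>L\<^esub> br w t)"
    using c wL by (simp add: bracket_smult_left bracket_smult_right smult_r_distr
        smult_assoc1[symmetric] R.m_comm[of "p_pow k"])
  finally show ?thesis using c wL by simp
qed

lemma split_domain_carrier: "x \<in> split_domain k \<Longrightarrow> x \<in> carrier L"
  by (auto elim!: split_domainE dest: hyperplane_carrier)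

lemma split_domain_submodule: "submodule (split_domain k) R L"
proof -
  have smult: "a \<odot>\<^bsub>L\<^esub> x \<in> split_domain k" if "a \<in> carrier R" "x \<in> split_domain k" for a x
    using that(2)
  proof (rule split_domainE)
    fix c w assume "c \<in> carrier R" "w \<in> hyperplane" "x = c \<odot>\<^bsub>L\<^esub> t \<oplus>\<^bsub>L\<^esub> p_pow k \<odot>\<^bsub>L\<^esub> w"
    then show ?thesis using that(1) split_domain_smult hyperplane_smult by (auto intro!: split_domainI)
  qed
  show ?thesis
  proof (rule submoduleI)
    show "split_domain k \<subseteq> carrier L" using split_domain_carrier by blast
    have "\<zero>\<^bsub>L\<^esub> = \<zero> \<odot>\<^bsub>L\<^esub> t \<oplus>\<^bsub>L\<^esub> p_pow k \<odot>\<^bsub>L\<^esub> \<zero>\<^bsub>L\<^esub>" by simp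
    then show "\<zero>\<^bsub>L\<^esub> \<in> split_domain k"
      using split_domainI[of \<zero> "\<zero>\<^bsub>L\<^esub>"] submodule_zero_closed[OF hyperplane_submodule] by simp
    fix x y assume x: "x \<in> split_domain k" and y: "y \<in> split_domain k"
    have "\<ominus>\<^bsub>L\<^esub> x = (\<ominus> \<one>) \<odot>\<^bsub>L\<^esub> x" using split_domain_carrier[OF x] by (simp add: smult_l_minus)
    then show "\<ominus>\<^bsub>L\<^esub> x \<in> split_domain k" using smult[OF _ x, of "\<ominus> \<one>"] by simp
    from x show "x \<oplus>\<^bsub>L\<^esub> y \<in> split_domain k"
    proof (rule split_domainE)
      fix c w assume x': "c \<in> carrier R" "w \<in> hyperplane" "x = c \<odot>\<^bsub>L\<^esub> t \<oplus>\<^bsub>L\<^esub> p_pow k \<odot>\<^bsub>L\<^esub> w"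
      from y show ?thesis
      proof (rule split_domainE)
        fix c' w' assume "c' \<in> carrier R" "w' \<in> hyperplane" "y = c' \<odot>\<^bsub>L\<^esub> t \<oplus>\<^bsub>L\<^esub> p_pow k \<odot>\<^bsub>L\<^esub> w'"
        then show ?thesis using x' split_domain_add hyperplane_add by (auto intro!: split_domainI)
      qed
    qed
  qed (rule smult)
qed

lemma split_endo_closed:
  assumes "x \<in> split_domain k"
  shows "split_endo k x \<in> carrier L"
proof -
  obtain c w where "c \<in> carrier R" "w \<in> hyperplane" "x = c \<odot>\<^bsub>L\<^esub> t \<oplus>\<^bsub>L\<^esub> p_pow k \<odot>\<^bsub>L\<^esub> w"
    using assms by (rule split_domainE)
  then show ?thesis using hyperplane_carrier[of w] by (simp add: split_endo_eq)
qed

lemma split_endo_add: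
  assumes x: "x \<in> split_domain k" and y: "y \<in> split_domain k"
  shows "split_endo k (x \<oplus>\<^bsub>L\<^esub> y) = split_endo k x \<oplus>\<^bsub>L\<^esub> split_endo k y"
proof -
  obtain c w c' w' where cw: "c \<in> carrier R" "w \<in> hyperplane" "x = c \<odot>\<^bsub>L\<^esub> t \<oplus>\<^bsub>L\<^esub> p_pow k \<odot>\<^bsub>L\<^esub> w"
    and cw': "c' \<in> carrier R" "w' \<in> hyperplane" "y = c' \<odot>\<^bsub>L\<^esub> t \<oplus>\<^bsub>L\<^esub> p_pow k \<odot>\<^bsub>L\<^esub> w'"
    using x y by (elim split_domainE)
  have "split_endo k (x \<oplus>\<^bsub>L\<^esub> y) = (c \<oplus> c') \<odot>\<^bsub>L\<^esub> t \<oplus>\<^bsub>L\<^esub> (w \<oplus>\<^bsub>L\<^esub> w')"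
    using cw cw' by (simp add: split_domain_add split_endo_eq hyperplane_add)
  also have "\<dots> = split_endo k x \<oplus>\<^bsub>L\<^esub> split_endo k y"
    using cw cw' hyperplane_carrier by (simp add: split_endo_eq smult_l_distr M.a_ac)
  finally show ?thesis .
qed

lemma split_endo_smult:
  assumes a: "a \<in> carrier R" and x: "x \<in> split_domain k"
  shows "split_endo k (a \<odot>\<^bsub>L\<^esub> x) = a \<odot>\<^bsub>L\<^esub> split_endo k x"
proof -
  obtain c w where cw: "c \<in> carrier R" "w \<in> hyperplane" "x = c \<odot>\<^bsub>L\<^esub> t \<oplus>\<^bsub>L\<^esub> p_pow k \<odot>\<^bsub>L\<^esub> w"
    using x by (elim split_domainE)
  have "split_endo k (a \<odot>\<^bsub>L\<^esub> x) = (a \<otimes> c) \<odot>\<^bsub>L\<^esub> t \<oplus>\<^bsub>L\<^esub> a \<odot>\<^bsub>L\<^esub> w"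
    using a cw by (simp add: split_domain_smult split_endo_eq hyperplane_smult)
  also have "\<dots> = a \<odot>\<^bsub>L\<^esub> split_endo k x"
    using a cw hyperplane_carrier by (simp add: split_endo_eq smult_r_distr smult_assoc1)
  finally show ?thesis .
qed

lemma split_endo_bracket:
  assumes x: "x \<in> split_domain k" and y: "y \<in> split_domain k"
  shows "br x y \<in> split_domain k" and "split_endo k (br x y) = br (split_endo k x) (split_endo k y)"
proof -
  obtain c w c' w' where cw: "c \<in> carrier R" "w \<in> hyperplane" "x = c \<odot>\<^bsub>L\<^esub> t \<oplus>\<^bsub>L\<^esub> p_pow k \<odot>\<^bsub>L\<^esub> w"
    and cw': "c' \<in> carrier R" "w' \<in> hyperplane" "y = c' \<odot>\<^bsub>L\<^esub> t \<oplus>\<^bsub>L\<^esub> p_pow k \<odot>\<^bsub>L\<^esub> w'"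
    using x y by (elim split_domainE)
  let ?v = "c \<odot>\<^bsub>L\<^esub> br t w' \<oplus>\<^bsub>L\<^esub> c' \<odot>\<^bsub>L\<^esub> br w t"
  have v: "?v \<in> hyperplane" using cw cw' by (intro bracket_hyperplane_line)
  have xy: "br x y = \<zero> \<odot>\<^bsub>L\<^esub> t \<oplus>\<^bsub>L\<^esub> p_pow k \<odot>\<^bsub>L\<^esub> ?v"
    using cw cw' by (simp add: split_domain_bracket)
  show "br x y \<in> split_domain k" unfolding xy using v by (intro split_domainI) simp_all
  have "split_endo k (br x y) = \<zero> \<odot>\<^bsub>L\<^esub> t \<oplus>\<^bsub>L\<^esub> ?v"
    unfolding xy by (rule split_endo_eq[OF R.zero_closed v])
  also have "\<dots> = ?v" using hyperplane_carrier[OF v] by simp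
  also have "\<dots> = br (split_endo k x) (split_endo k y)"
    using cw cw' by (simp add: split_endo_eq bracket_line_plus)
  finally show "split_endo k (br x y) = br (split_endo k x) (split_endo k y)" .
qed

lemma split_virtual_endo:
  assumes "finite (a_rcosets\<^bsub>L\<^esub> (split_domain k))"
  shows "virtual_endo R L br (split_domain k) (split_endo k)"
proof -
  have "lie_subalgebra R L br (split_domain k)"
    unfolding lie_subalgebra_def using split_domain_submodule split_endo_bracket(1) by blast
  moreover have "\<forall>x\<in>split_domain k. split_endo k x \<in> carrier L" using split_endo_closed by blast
  moreover have "\<forall>x\<in>split_domain k. \<forall>y\<in>split_domain k.
      split_endo k (x \<oplus>\<^bsub>L\<^esub> y) = split_endo k x \<oplus>\<^bsub>L\<^esub> split_endo k y"
    using split_endo_add by blast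
  moreover have "\<forall>a\<in>carrier R. \<forall>x\<in>split_domain k. split_endo k (a \<odot>\<^bsub>L\<^esub> x) = a \<odot>\<^bsub>L\<^esub> split_endo k x"
    using split_endo_smult by blast
  moreover have "\<forall>x\<in>split_domain k. \<forall>y\<in>split_domain k.
      split_endo k (br x y) = br (split_endo k x) (split_endo k y)"
    using split_endo_bracket(2) by blast
  ultimately show ?thesis unfolding virtual_endo_def using assms by blast
qed

text \<open>Iterating the endomorphism divides the hyperplane components of an invariant ideal by
  arbitrarily high powers of p.\<close>
lemma split_invariant_ideal_in_line:
  assumes k: "0 < k" and I: "I \<subseteq> split_domain k" "split_endo k ` I \<subseteq> I" and x: "x \<in> I"
  shows "x = F x \<odot>\<^bsub>L\<^esub> t"
proof -
  let ?S = "(\<lambda>y. y \<ominus>\<^bsub>L\<^esub> F y \<odot>\<^bsub>L\<^esub> t) ` I"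
  have zero: "x \<ominus>\<^bsub>L\<^esub> F x \<odot>\<^bsub>L\<^esub> t = \<zero>\<^bsub>L\<^esub>"
  proof (rule self_divisible_subset_eq_zero[OF _ k])
    show "?S \<subseteq> carrier L" using I(1) split_domain_carrier by auto
    show "x \<ominus>\<^bsub>L\<^esub> F x \<odot>\<^bsub>L\<^esub> t \<in> ?S" using x by blast
    fix s assume "s \<in> ?S"
    then obtain y where y: "y \<in> I" "s = y \<ominus>\<^bsub>L\<^esub> F y \<odot>\<^bsub>L\<^esub> t" by blast
    then have "y \<in> split_domain k" using I(1) by blast
    then obtain c w where cw: "c \<in> carrier R" "w \<in> hyperplane" "y = c \<odot>\<^bsub>L\<^esub> t \<oplus>\<^bsub>L\<^esub> p_pow k \<odot>\<^bsub>L\<^esub> w"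
      by (rule split_domainE)
    have wL: "w \<in> carrier L" using cw(2) by (rule hyperplane_carrier)
    have "s = p_pow k \<odot>\<^bsub>L\<^esub> w"
      using y(2) cw wL hyperplane_smult[OF p_pow_closed cw(2)] by (simp add: F_line_plus line_plus_minus)
    moreover have "w = split_endo k y \<ominus>\<^bsub>L\<^esub> F (split_endo k y) \<odot>\<^bsub>L\<^esub> t"
      using cw wL by (simp add: split_endo_eq F_line_plus line_plus_minus)
    moreover have "split_endo k y \<in> I" using I(2) y(1) by blast
    ultimately show "\<exists>z\<in>?S. s = p_pow k \<odot>\<^bsub>L\<^esub> z" by blast
  qed
  have xL: "x \<in> carrier L" using x I(1) split_domain_carrier by blast
  then have "x = F x \<odot>\<^bsub>L\<^esub> t \<oplus>\<^bsub>L\<^esub> (x \<ominus>\<^bsub>L\<^esub> F x \<odot>\<^bsub>L\<^esub> t)" by (rule decomposition(2))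
  also have "\<dots> = F x \<odot>\<^bsub>L\<^esub> t" using xL by (simp only: zero) simp
  finally show ?thesis .
qed

lemma abelian_if_hyperplane_centralizes:
  assumes central: "\<And>z. z \<in> hyperplane \<Longrightarrow> br z t = \<zero>\<^bsub>L\<^esub>" and x: "x \<in> carrier L" and y: "y \<in> carrier L"
  shows "br x y = \<zero>\<^bsub>L\<^esub>"
proof -
  let ?x = "x \<ominus>\<^bsub>L\<^esub> F x \<odot>\<^bsub>L\<^esub> t" and ?y = "y \<ominus>\<^bsub>L\<^esub> F y \<odot>\<^bsub>L\<^esub> t"
  have h: "?x \<in> hyperplane" "?y \<in> hyperplane" using x y by (simp_all add: decomposition(1))
  have "br t ?y = \<ominus>\<^bsub>L\<^esub> br ?y t" using h(2) hyperplane_carrier by (intro bracket_antisym) auto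
  then have "br t ?y = \<zero>\<^bsub>L\<^esub>" using central[OF h(2)] by simp
  moreover have "br x y = br (F x \<odot>\<^bsub>L\<^esub> t \<oplus>\<^bsub>L\<^esub> ?x) (F y \<odot>\<^bsub>L\<^esub> t \<oplus>\<^bsub>L\<^esub> ?y)"
    using decomposition(2)[OF x] decomposition(2)[OF y] by (rule arg_cong2[where f = br])
  then have "br x y = F x \<odot>\<^bsub>L\<^esub> br t ?y \<oplus>\<^bsub>L\<^esub> F y \<odot>\<^bsub>L\<^esub> br ?x t"
    using bracket_line_plus[OF _ _ h] x y by simp
  ultimately show ?thesis using central[OF h(1)] x y by simp
qed

lemma split_invariant_ideal_trivial:
  assumes nonabelian: "\<exists>x\<in>carrier L. \<exists>y\<in>carrier L. br x y \<noteq> \<zero>\<^bsub>L\<^esub>" and k: "0 < k"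
    and I: "lie_ideal R L br I" "I \<subseteq> split_domain k" "split_endo k ` I \<subseteq> I" and x: "x \<in> I"
  shows "x = \<zero>\<^bsub>L\<^esub>"
proof (rule ccontr)
  assume "x \<noteq> \<zero>\<^bsub>L\<^esub>"
  have line: "y = F y \<odot>\<^bsub>L\<^esub> t" if "y \<in> I" for y using split_invariant_ideal_in_line[OF k I(2,3) that] .
  have xL: "x \<in> carrier L" using x I(2) split_domain_carrier by blast
  have "F x \<noteq> \<zero>"
  proof
    assume "F x = \<zero>"
    have "x = F x \<odot>\<^bsub>L\<^esub> t" by (rule line[OF x])
    also have "\<dots> = \<zero>\<^bsub>L\<^esub>" using \<open>F x = \<zero>\<close> by simp
    finally show False using \<open>x \<noteq> \<zero>\<^bsub>L\<^esub>\<close> by simp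
  qed
  then have Fx: "F x \<in> carrier R" "F x \<noteq> \<zero>" using xL by simp_all
  have "br z t = \<zero>\<^bsub>L\<^esub>" if z: "z \<in> hyperplane" for z
  proof -
    have zL: "z \<in> carrier L" using z by (rule hyperplane_carrier)
    have "br x z \<in> hyperplane" using xL z by (simp add: hyperplane_iff kernel_ideal)
    then have "\<ominus>\<^bsub>L\<^esub> br x z \<in> hyperplane" by (rule submoduleE(3)[OF hyperplane_submodule])
    then have "F (br z x) = \<zero>" using bracket_antisym[OF xL zL] by (simp add: hyperplane_iff)
    moreover have "br z x \<in> I" using I(1) zL x unfolding lie_ideal_def by blast
    then have "br z x = F (br z x) \<odot>\<^bsub>L\<^esub> t" by (rule line)
    ultimately have "\<zero>\<^bsub>L\<^esub> = br z x" by simp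
    also have "\<dots> = br z (F x \<odot>\<^bsub>L\<^esub> t)" using line[OF x] by (rule arg_cong)
    also have "\<dots> = F x \<odot>\<^bsub>L\<^esub> br z t" using Fx zL by (simp add: bracket_smult_right)
    finally show ?thesis using smult_eq_zero_imp[OF is_domain Fx] zL by simp
  qed
  then show False using nonabelian abelian_if_hyperplane_centralizes by blast
qed

lemma split_simple_virtual_endo:
  assumes "finite (a_rcosets\<^bsub>L\<^esub> (split_domain k))"
    and "\<exists>x\<in>carrier L. \<exists>y\<in>carrier L. br x y \<noteq> \<zero>\<^bsub>L\<^esub>" and "0 < k"
  shows "simple_virtual_endo R L br (split_domain k) (split_endo k)"
  using split_invariant_ideal_trivial[OF assms(2,3)]
  by (intro simple_virtual_endoI[OF split_virtual_endo[OF assms(1)]]) blast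

end

section \<open>Lattices with an abelian ideal of corank one\<close>

locale lattice_with_abelian_ideal = padic_lie_lattice +
  fixes d :: nat and A :: "'a set" and a :: "nat \<Rightarrow> 'a"
  assumes rank: "n = Suc d"
    and A_ideal: "lie_ideal R L br A" and A_abelian: "abelian_subset L br A"
    and A_basis: "is_basis R L A d a"
begin

lemma A_submodule: "submodule A R L"
  using A_ideal unfolding lie_ideal_def by blast

lemma A_carrier: "A \<subseteq> carrier L"
  using submoduleE(1)[OF A_submodule] .

lemma a_mem: "j < d \<Longrightarrow> a j \<in> A"
  using A_basis unfolding is_basis_def by blast

lemma a_closed: "j < d \<Longrightarrow> a j \<in> carrier L"
  using a_mem A_carrier by blast

text \<open>The coordinate vectors of a_0, ..., a_(d-1) satisfy a non-trivial linear relation, which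
  we normalise so that one coefficient is a unit.\<close>
lemma annihilating_functional_exists:
  obtains g i0 u where "\<And>i. i < n \<Longrightarrow> g i \<in> carrier R" "i0 < n" "u \<in> carrier R" "g i0 \<otimes> u = \<one>"
    "\<And>j. j < d \<Longrightarrow> functional g (a j) = \<zero>"
proof -
  have "\<exists>f. (\<forall>i\<in>{..<n}. f i \<in> carrier R) \<and> (\<exists>i\<in>{..<n}. f i \<noteq> \<zero>) \<and>
      (\<forall>j\<in>{..<d}. (\<Oplus>i\<in>{..<n}. f i \<otimes> coords (a j) i) = \<zero>)"
  proof (rule homogeneous_system_nontrivial_solution)
    show "card {..<d} < card {..<n}" using rank by simp
  qed (use a_closed in auto)
  then obtain f i1 where f: "\<And>i. i < n \<Longrightarrow> f i \<in> carrier R" "i1 < n" "f i1 \<noteq> \<zero>"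
    "\<And>j. j < d \<Longrightarrow> (\<Oplus>i\<in>{..<n}. f i \<otimes> coords (a j) i) = \<zero>"
    by auto
  obtain v g i0 where g: "\<And>i. i \<in> {..<n} \<Longrightarrow> g i \<in> carrier R"
    "\<And>i. i \<in> {..<n} \<Longrightarrow> f i = p_pow v \<otimes> g i" and i0: "i0 \<in> {..<n}" "g i0 1 \<noteq> 0"
    by (rule primitive_factorization[of "{..<n}" f i1]) (use f in auto)
  obtain u where u: "u \<in> carrier R" "g i0 \<otimes> u = \<one>"
    using unit_if_residue_nonzero[of "g i0"] g i0 by blast
  have "functional g (a j) = \<zero>" if j: "j < d" for j
  proof -
    have "p_pow v \<otimes> functional g (a j) = (\<Oplus>i\<in>{..<n}. p_pow v \<otimes> (g i \<otimes> coords (a j) i))"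
      unfolding functional_def using g a_closed[OF j] by (intro finsum_rdistr) auto
    also have "\<dots> = (\<Oplus>i\<in>{..<n}. f i \<otimes> coords (a j) i)"
      using g a_closed[OF j] by (intro R.finsum_cong') (auto simp: R.m_assoc[symmetric])
    also have "\<dots> = \<zero>" using f(4)[OF j] .
    finally show ?thesis
      using integral[of "p_pow v" "functional g (a j)"] p_pow_nonzero g a_closed[OF j] by auto
  qed
  then show thesis using that g i0 u by auto
qed

end

locale lattice_with_annihilating_functional = lattice_with_abelian_ideal +
  fixes g :: "nat \<Rightarrow> nat \<Rightarrow> int" and i0 :: nat and u :: "nat \<Rightarrow> int"
  assumes g_closed: "\<And>i. i < n \<Longrightarrow> g i \<in> carrier R" and i0: "i0 < n"
    and u: "u \<in> carrier R" and g_u: "g i0 \<otimes> u = \<one>"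
    and annihilates: "\<And>j. j < d \<Longrightarrow> functional g (a j) = \<zero>"
begin

definition t :: 'a where
  "t = u \<odot>\<^bsub>L\<^esub> e i0"

lemma t_in_carrier: "t \<in> carrier L"
  unfolding t_def using u i0 by simp

lemma coords_t: "i < n \<Longrightarrow> coords t i = (if i = i0 then u else \<zero>)"
  unfolding t_def using coords_smult[OF u basis_closed[OF i0]] coords_basis[OF i0] u by simp

lemma functional_t: "functional g t = \<one>"
  using functional_single_coord[OF g_closed t_in_carrier i0] coords_t i0 g_u by simp

lemma g_i0_nonzero: "g i0 \<noteq> \<zero>"
  using g_u u by (metis one_not_zero l_null)

lemma functional_A: "x \<in> A \<Longrightarrow> functional g x = \<zero>"
proof -
  assume "x \<in> A"
  then obtain c where c: "c \<in> {..<d} \<rightarrow>\<^sub>E carrier R" "x = (\<Oplus>\<^bsub>L\<^esub>j\<in>{..<d}. c j \<odot>\<^bsub>L\<^esub> a j)"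
    using A_basis unfolding is_basis_def by blast
  have "functional g x = (\<Oplus>j\<in>{..<d}. c j \<otimes> functional g (a j))"
    unfolding c(2) using c(1) a_closed g_closed
    by (intro linear_map_finsum) (auto simp: functional_add functional_smult)
  also have "\<dots> = (\<Oplus>j\<in>{..<d}. \<zero>)"
    using c(1) annihilates by (intro R.finsum_cong') (auto simp: PiE_iff)
  finally show ?thesis by simp
qed

lemma annihilated_combination_eq_zero:
  assumes J: "finite J" and lam: "lam \<in> J \<rightarrow> carrier R" and X: "X \<in> J \<rightarrow> carrier L"
    and FX: "\<And>j. j \<in> J \<Longrightarrow> functional g (X j) = \<zero>"
    and rel: "\<And>i. i < n \<Longrightarrow> i \<noteq> i0 \<Longrightarrow> (\<Oplus>j\<in>J. lam j \<otimes> coords (X j) i) = \<zero>"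
  shows "(\<Oplus>\<^bsub>L\<^esub>j\<in>J. lam j \<odot>\<^bsub>L\<^esub> X j) = \<zero>\<^bsub>L\<^esub>"
proof -
  let ?y = "\<Oplus>\<^bsub>L\<^esub>j\<in>J. lam j \<odot>\<^bsub>L\<^esub> X j"
  have y: "?y \<in> carrier L" using lam X by (intro M.finsum_closed) auto
  have coords_y: "coords ?y i = \<zero>" if "i < n" "i \<noteq> i0" for i
    using that J lam X rel by (simp add: coords_finsum)
  have "functional g ?y = (\<Oplus>j\<in>J. lam j \<otimes> functional g (X j))"
    using J lam X g_closed by (intro linear_map_finsum) (auto simp: functional_add functional_smult)
  also have "\<dots> = (\<Oplus>j\<in>J. \<zero>)"
    using lam FX by (intro R.finsum_cong') (auto simp: Pi_iff)
  finally have "g i0 \<otimes> coords ?y i0 = \<zero>"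
    using functional_single_coord[OF g_closed y i0 coords_y] by simp
  moreover have "coords ?y i0 \<in> carrier R" using y i0 by simp
  ultimately have "coords ?y i0 = \<zero>" using integral_Zp g_i0_nonzero g_closed[OF i0] by blast
  then show ?thesis using coords_eq_zeroI[OF y] coords_y by metis
qed

text \<open>The kernel of the functional has the same rank d as A, so each of its elements has a
  non-zero multiple in A.\<close>
lemma saturation:
  assumes x: "x \<in> carrier L" "functional g x = \<zero>"
  shows "\<exists>c\<in>carrier R. c \<noteq> \<zero> \<and> c \<odot>\<^bsub>L\<^esub> x \<in> A"
proof -
  define X where "X j = (if j = d then x else a j)" for j
  have X: "X \<in> {..d} \<rightarrow> carrier L" using x a_closed by (auto simp: X_def)
  have "\<exists>lam. (\<forall>j\<in>{..d}. lam j \<in> carrier R) \<and> (\<exists>j\<in>{..d}. lam j \<noteq> \<zero>) \<and>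
      (\<forall>i\<in>{..<n} - {i0}. (\<Oplus>j\<in>{..d}. lam j \<otimes> coords (X j) i) = \<zero>)"
  proof (rule homogeneous_system_nontrivial_solution)
    show "card ({..<n} - {i0}) < card {..d}" using i0 rank by simp
  qed (use X in \<open>auto simp: Pi_iff\<close>)
  then obtain lam where lam: "lam \<in> {..d} \<rightarrow> carrier R" "\<exists>j\<in>{..d}. lam j \<noteq> \<zero>"
    "\<And>i. i < n \<Longrightarrow> i \<noteq> i0 \<Longrightarrow> (\<Oplus>j\<in>{..d}. lam j \<otimes> coords (X j) i) = \<zero>"
    by auto
  define S where "S = (\<Oplus>\<^bsub>L\<^esub>j\<in>{..<d}. lam j \<odot>\<^bsub>L\<^esub> a j)"
  have S: "S \<in> A" "S \<in> carrier L"
    unfolding S_def using lam(1) a_mem a_closed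
    by (auto intro!: submodule_finsum_closed[OF A_submodule] M.finsum_closed simp: Pi_iff)
  have "{..d} = insert d {..<d}" by auto
  then have "(\<Oplus>\<^bsub>L\<^esub>j\<in>{..d}. lam j \<odot>\<^bsub>L\<^esub> X j) = lam d \<odot>\<^bsub>L\<^esub> X d \<oplus>\<^bsub>L\<^esub> (\<Oplus>\<^bsub>L\<^esub>j\<in>{..<d}. lam j \<odot>\<^bsub>L\<^esub> X j)"
    using lam(1) X by (simp add: M.finsum_insert Pi_iff)
  also have "(\<Oplus>\<^bsub>L\<^esub>j\<in>{..<d}. lam j \<odot>\<^bsub>L\<^esub> X j) = S"
    unfolding S_def X_def using lam(1) a_closed by (intro M.finsum_cong') (auto simp: Pi_iff)
  also have "(\<Oplus>\<^bsub>L\<^esub>j\<in>{..d}. lam j \<odot>\<^bsub>L\<^esub> X j) = \<zero>\<^bsub>L\<^esub>"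
    using lam(1,3) X x annihilates by (intro annihilated_combination_eq_zero) (auto simp: X_def)
  finally have sum0: "lam d \<odot>\<^bsub>L\<^esub> x \<oplus>\<^bsub>L\<^esub> S = \<zero>\<^bsub>L\<^esub>" by (simp add: X_def)
  show ?thesis
  proof (cases "lam d = \<zero>")
    case True
    then have "S = \<zero>\<^bsub>L\<^esub>" using sum0 x S by simp
    then have "lam j = \<zero>" if "j < d" for j
      using basis_lincomb_eq_zero[OF module_axioms A_basis submodule_zero_closed[OF A_submodule]
          a_closed, of lam j] lam(1) that by (simp add: S_def Pi_iff)
    then show ?thesis using lam(2) True by (metis atMost_iff le_neq_implies_less)
  next
    case False
    have "lam d \<odot>\<^bsub>L\<^esub> x = \<ominus>\<^bsub>L\<^esub> S" using sum0 x S lam(1) by (intro M.minus_equality[symmetric]) auto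
    moreover have "\<ominus>\<^bsub>L\<^esub> S \<in> A" using submoduleE(3)[OF A_submodule S(1)] .
    ultimately show ?thesis using False lam(1) by auto
  qed
qed

lemma kernel_abelian:
  assumes x: "x \<in> carrier L" "functional g x = \<zero>" and y: "y \<in> carrier L" "functional g y = \<zero>"
  shows "br x y = \<zero>\<^bsub>L\<^esub>"
proof -
  obtain c c' where c: "c \<in> carrier R" "c \<noteq> \<zero>" "c \<odot>\<^bsub>L\<^esub> x \<in> A"
    and c': "c' \<in> carrier R" "c' \<noteq> \<zero>" "c' \<odot>\<^bsub>L\<^esub> y \<in> A"
    using saturation[OF x] saturation[OF y] by blast
  have "(c \<otimes> c') \<odot>\<^bsub>L\<^esub> br x y = br (c \<odot>\<^bsub>L\<^esub> x) (c' \<odot>\<^bsub>L\<^esub> y)"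
    using c c' x y by (simp add: bracket_smult_left bracket_smult_right smult_assoc1[symmetric] R.m_comm)
  also have "\<dots> = \<zero>\<^bsub>L\<^esub>" using A_abelian c(3) c'(3) unfolding abelian_subset_def by blast
  moreover have cc': "c \<otimes> c' \<in> carrier R" "c \<otimes> c' \<noteq> \<zero>" using integral_Zp[of c c'] c c' by auto
  ultimately show ?thesis using smult_eq_zero_imp[OF is_domain cc'] x y by simp
qed

lemma kernel_ideal:
  assumes z: "z \<in> carrier L" and x: "x \<in> carrier L" "functional g x = \<zero>"
  shows "functional g (br z x) = \<zero>"
proof -
  obtain c where c: "c \<in> carrier R" "c \<noteq> \<zero>" "c \<odot>\<^bsub>L\<^esub> x \<in> A" using saturation[OF x] by blast
  have "c \<otimes> functional g (br z x) = functional g (br z (c \<odot>\<^bsub>L\<^esub> x))"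
    using c z x g_closed by (simp add: bracket_smult_right functional_smult)
  also have "\<dots> = \<zero>" using A_ideal c(3) z functional_A unfolding lie_ideal_def by blast
  finally show ?thesis using integral_Zp[of c] c z x g_closed by auto
qed

sublocale abelian_splitting R L n e p br "functional g" t
  using g_closed functional_add functional_smult t_in_carrier functional_t kernel_abelian kernel_ideal
  by unfold_locales auto

lemma kernel_coord_i0_residue:
  assumes y: "y \<in> carrier L" "functional g y = \<zero>"
    and other: "\<And>i. i < n \<Longrightarrow> i \<noteq> i0 \<Longrightarrow> coords y i k = 0"
  shows "coords y i0 k = 0"
proof -
  have "(functional g y) k = (\<Sum>i<n. (g i \<otimes> coords y i) k) mod int p ^ k"
    unfolding functional_def using g_closed y by (intro finsum_apply) auto
  also have "(\<Sum>i<n. (g i \<otimes> coords y i) k) = (\<Sum>i<n. if i = i0 then (g i0 \<otimes> coords y i0) k else 0)"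
    using other by (intro sum.cong) (auto simp: mult_apply)
  also have "\<dots> = (g i0 \<otimes> coords y i0) k" using i0 by simp
  finally have "(g i0 \<otimes> coords y i0) k = 0"
    using y g_closed[OF i0] residue_mod_self[of "g i0 \<otimes> coords y i0" k] coords_closed[OF y(1) i0]
    by (simp add: zero_eq)
  moreover have "coords y i0 = u \<otimes> (g i0 \<otimes> coords y i0)"
    using g_u u g_closed[OF i0] y i0 by (simp add: m_assoc[symmetric] m_comm[of u])
  ultimately show ?thesis by (metis mult_apply mult_zero_right mod_0)
qed

lemma split_domain_subset: "split_domain k \<subseteq> congruence_sublattice (\<lambda>i. if i = i0 then 0 else k)"
proof
  fix x assume "x \<in> split_domain k"
  then obtain c w where cw: "c \<in> carrier R" "w \<in> hyperplane" "x = c \<odot>\<^bsub>L\<^esub> t \<oplus>\<^bsub>L\<^esub> p_pow k \<odot>\<^bsub>L\<^esub> w"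
    by (rule split_domainE)
  have wL: "w \<in> carrier L" using cw(2) by (rule hyperplane_carrier)
  have "coords x i k = 0" if "i < n" "i \<noteq> i0" for i
    using that cw wL t_in_carrier by (simp add: coords_add coords_smult coords_t p_pow_mult_apply)
  moreover have "x \<in> carrier L" using cw wL t_in_carrier by simp
  ultimately show "x \<in> congruence_sublattice (\<lambda>i. if i = i0 then 0 else k)"
    unfolding congruence_sublattice_def by (auto simp: residue_0)
qed

lemma congruence_sublattice_subset: "congruence_sublattice (\<lambda>i. if i = i0 then 0 else k) \<subseteq> split_domain k"
proof
  fix x assume x: "x \<in> congruence_sublattice (\<lambda>i. if i = i0 then 0 else k)"
  then have xL: "x \<in> carrier L" by (simp add: congruence_sublattice_def)
  define y where "y = x \<ominus>\<^bsub>L\<^esub> functional g x \<odot>\<^bsub>L\<^esub> t"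
  have "y \<in> hyperplane" unfolding y_def using xL by (rule decomposition(1))
  then have yL: "y \<in> carrier L" and Fy: "functional g y = \<zero>" by (simp_all add: hyperplane_iff)
  have other: "coords y i k = 0" if "i < n" "i \<noteq> i0" for i
  proof -
    have "coords x i k = 0" using x that unfolding congruence_sublattice_def by force
    then show ?thesis
      using that xL t_in_carrier g_closed by (simp add: y_def coords_minus coords_smult coords_t R.minus_eq)
  qed
  then have "coords y i k = 0" if "i < n" for i
    using kernel_coord_i0_residue[OF yL Fy] that by (cases "i = i0") auto
  then obtain w where w: "w \<in> carrier L" "y = p_pow k \<odot>\<^bsub>L\<^esub> w"
    using p_pow_divisible[OF yL] by blast
  have "p_pow k \<otimes> functional g w = \<zero>" using Fy w g_closed by (simp add: functional_smult)
  then have "w \<in> hyperplane"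
    using integral_Zp[of "p_pow k"] p_pow_nonzero w g_closed by (auto simp: hyperplane_iff)
  then have "functional g x \<odot>\<^bsub>L\<^esub> t \<oplus>\<^bsub>L\<^esub> p_pow k \<odot>\<^bsub>L\<^esub> w \<in> split_domain k"
    using xL g_closed by (intro split_domainI) simp_all
  moreover have "functional g x \<odot>\<^bsub>L\<^esub> t \<oplus>\<^bsub>L\<^esub> p_pow k \<odot>\<^bsub>L\<^esub> w = x"
    using decomposition(2)[OF xL, symmetric] w(2) unfolding y_def by simp
  ultimately show "x \<in> split_domain k" by simp
qed

lemma split_domain_eq: "split_domain k = congruence_sublattice (\<lambda>i. if i = i0 then 0 else k)"
  using split_domain_subset congruence_sublattice_subset by (rule subset_antisym)

lemma index_split_domain: "lattice_index L (split_domain k) = p ^ (d * k)"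
proof -
  have "(\<Prod>i<n. p ^ (if i = i0 then 0 else k)) = (\<Prod>i\<in>{..<n} - {i0}. p ^ k)"
    using i0 by (intro prod.mono_neutral_cong_right) auto
  also have "\<dots> = p ^ (d * k)" using i0 rank by (simp add: power_mult[symmetric] mult.commute)
  finally show ?thesis
    unfolding lattice_index_def split_domain_eq card_rcosets_congruence_sublattice .
qed

lemma nonabelian_self_similar:
  assumes "\<exists>x\<in>carrier L. \<exists>y\<in>carrier L. br x y \<noteq> \<zero>\<^bsub>L\<^esub>" and "0 < k"
  shows "\<exists>M \<phi>. simple_virtual_endo R L br M \<phi> \<and> lattice_index L M = p ^ (d * k)"
proof (intro exI conjI)
  have "finite (a_rcosets\<^bsub>L\<^esub> (split_domain k))"
    unfolding split_domain_eq by (rule finite_rcosets_congruence_sublattice)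
  then show "simple_virtual_endo R L br (split_domain k) (split_endo k)"
    using assms by (rule split_simple_virtual_endo)
  show "lattice_index L (split_domain k) = p ^ (d * k)" by (rule index_split_domain)
qed

end

lemma (in lattice_with_abelian_ideal) self_similar:
  assumes "0 < d" "0 < k"
  shows "\<exists>M \<phi>. simple_virtual_endo R L br M \<phi> \<and> lattice_index L M = p ^ (d * k)"
proof (cases "\<forall>x\<in>carrier L. \<forall>y\<in>carrier L. br x y = \<zero>\<^bsub>L\<^esub>")
  case True
  then show ?thesis using abelian_self_similar[OF _ rank] assms by simp
next
  case False
  obtain g i0 u where "\<And>i. i < n \<Longrightarrow> g i \<in> carrier R" "i0 < n" "u \<in> carrier R" "g i0 \<otimes> u = \<one>"
    "\<And>j. j < d \<Longrightarrow> functional g (a j) = \<zero>"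
    by (rule annihilating_functional_exists) blast
  then interpret lattice_with_annihilating_functional R L n e p br d A a g i0 u
    by unfold_locales
  show ?thesis using False assms(2) by (intro nonabelian_self_similar) auto
qed

theorem proposition1p6:
  fixes p k d :: nat and L :: "(nat \<Rightarrow> int, 'a) module" and br :: "'a \<Rightarrow> 'a \<Rightarrow> 'a"
  assumes "prime p" and "k \<ge> 1" and "d \<ge> 1"
    and "lie_lattice p L br (d + 1)"
    and "\<exists>A. lie_ideal (Zp p) L br A \<and> abelian_subset L br A \<and> free_rank (Zp p) L A d"
  shows "self_similar_of_index p L br (p ^ (d * k))"
proof -
  have lie: "lie_algebra (Zp p) L br" and "free_rank (Zp p) L (carrier L) (Suc d)"
    using assms(4) unfolding lie_lattice_def by auto
  then obtain e where e: "is_basis (Zp p) L (carrier L) (Suc d) e"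
    unfolding free_rank_def by auto
  obtain A a where A: "lie_ideal (Zp p) L br A" "abelian_subset L br A" "is_basis (Zp p) L A d a"
    using assms(5) unfolding free_rank_def by auto
  interpret module "Zp p" L using lie unfolding lie_algebra_def by blast
  interpret lattice_with_abelian_ideal "Zp p" L "Suc d" e p br d A a
    using assms(1) e lie A by unfold_locales auto
  show ?thesis
    unfolding self_similar_of_index_def using self_similar assms(2,3) by simp
qed

end
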